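(* Consider the stochastic energy exchange model $\mathbf{E}_t$ with transition kernel $P^t$ and the function $V=V_\eta$ described in the context. For all sufficiently small $\eta>0$ and $h>0$, there exist constants $c_0>0$ and $M_0>1$, depending on $\eta$, $N$ and $h$, such that $$(P^hV)(\mathbf{E})-V(\mathbf{E})\le -c_0V^{\alpha}(\mathbf{E})$$ for every $\mathbf{E}$ with $V(\mathbf{E})>M_0$, where $\alpha=1-\frac{1}{2(1-\eta)}$.
   Context: Fix an integer $N\ge1$, bath temperatures $T_L,T_R>0$ and a sufficiently large constant $K$ ($K\gg T_L,T_R$). Let $R(a,b)=\min\{K,\sqrt{\min(a,b)}\}$. The stochastic energy exchange model is the Markov jump process $\mathbf{E}_t=(E_1(t),\dots,E_N(t))$ on $\mathbb{R}^N_+$: for each $i=1,\dots,N-1$ an exponential clock with rate $R(E_i,E_{i+1})$ is attached to sites $i,i+1$; when it rings, $(E_i,E_{i+1})$ becomes $(p(E_i+E_{i+1}),(1-p)(E_i+E_{i+1}))$ with $p$ uniform on $(0,1)$. A clock of rate $R(T_L,E_1)$ (resp. $R(E_N,T_R)$) links site $1$ to the left bath (resp. site $N$ to the right bath); when it rings, $E_1$ becomes $p(E_1+X_L)$ (resp. $E_N$ becomes $p(E_N+X_R)$), with $p$ uniform on $(0,1)$ and $X_L$ (resp. $X_R$) exponential with mean $T_L$ (resp. $T_R$). All clocks and random variables are independent. $P^t$ is the transition kernel and $(P^hV)(\mathbf{E})=\mathbb{E}_{\mathbf{E}}[V(\mathbf{E}_h)]$. Let $a_m=1-\frac{2^{m-1}-1}{2^N-1}$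 ($m=1,\dots,N$), $V_{m,k}(\mathbf{E})=\big(\sum_{j=0}^{m-1}E_{k+j}\big)^{a_m\eta-1}$ for $1\le m\le N$, $1\le k\le N-m+1$, and $V(\mathbf{E})=\sum_{m=1}^N\sum_{k=1}^{N-m+1}V_{m,k}(\mathbf{E})$. *)

theory Defs
  imports "HOL-Probability.Probability"
begin

text \<open>States: functions E :: nat => real, with E i the energy of site i, i = 1..N.\<close>

definition rateR :: "real \<Rightarrow> real \<Rightarrow> real \<Rightarrow> real" where
  "rateR K a b = min K (sqrt (min a b))"

definition a_exp :: "nat \<Rightarrow> nat \<Rightarrow> real" where
  "a_exp N m = 1 - (2 ^ (m - 1) - 1) / (2 ^ N - 1)"

definition Vm :: "nat \<Rightarrow> real \<Rightarrow> nat \<Rightarrow> nat \<Rightarrow> (nat \<Rightarrow> real) \<Rightarrow> real" where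
  "Vm N \<eta> m k E = (\<Sum>j<m. E (k + j)) powr (a_exp N m * \<eta> - 1)"

definition Vfun :: "nat \<Rightarrow> real \<Rightarrow> (nat \<Rightarrow> real) \<Rightarrow> real" where
  "Vfun N \<eta> E = (\<Sum>m = 1..N. \<Sum>k = 1..N - m + 1. Vm N \<eta> m k E)"

text \<open>Uniform bound on the total jump rate: N+1 clocks, each of rate at most K.\<close>
definition Lam :: "nat \<Rightarrow> real \<Rightarrow> real" where
  "Lam N K = real (N + 1) * K"

definition total_rate :: "nat \<Rightarrow> real \<Rightarrow> real \<Rightarrow> real \<Rightarrow> (nat \<Rightarrow> real) \<Rightarrow> real" where
  "total_rate N K TL TR E =
     (\<Sum>i = 1..N - 1. rateR K (E i) (E (Suc i))) + rateR K TL (E 1) + rateR K (E N) TR"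

text \<open>One step of the uniformized (embedded) chain, acting on nonnegative observables:
  with total clock rate Lam, a clock event is the exchange i,i+1 with prob. R_i/Lam,
  left/right bath exchange with prob. R_L/Lam, R_R/Lam, and a fictitious jump otherwise.\<close>
definition Qop :: "nat \<Rightarrow> real \<Rightarrow> real \<Rightarrow> real \<Rightarrow> ((nat \<Rightarrow> real) \<Rightarrow> ennreal) \<Rightarrow> (nat \<Rightarrow> real) \<Rightarrow> ennreal" where
  "Qop N K TL TR f E = ennreal (1 / Lam N K) *
     ((\<Sum>i = 1..N - 1. ennreal (rateR K (E i) (E (Suc i))) *
         (\<integral>\<^sup>+ p \<in> {0<..<1}.
            f (E(i := p * (E i + E (Suc i)), Suc i := (1 - p) * (E i + E (Suc i)))) \<partial>lborel))
      + ennreal (rateR K TL (E 1)) *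
         (\<integral>\<^sup>+ x. ennreal (exponential_density (1 / TL) x) *
            (\<integral>\<^sup>+ p \<in> {0<..<1}. f (E(1 := p * (E 1 + x))) \<partial>lborel) \<partial>lborel)
      + ennreal (rateR K (E N) TR) *
         (\<integral>\<^sup>+ x. ennreal (exponential_density (1 / TR) x) *
            (\<integral>\<^sup>+ p \<in> {0<..<1}. f (E(N := p * (E N + x))) \<partial>lborel) \<partial>lborel)
      + ennreal (Lam N K - total_rate N K TL TR E) * f E)"

text \<open>Transition semigroup of the jump process (uniformization, valid since all rates
  are bounded by K): (P^h f)(E) = sum_n e^{-Lam h} (Lam h)^n / n! (Q^n f)(E).\<close>
definition Ph :: "nat \<Rightarrow> real \<Rightarrow> real \<Rightarrow> real \<Rightarrow> real \<Rightarrow> ((nat \<Rightarrow> real) \<Rightarrow> ennreal) \<Rightarrow> (nat \<Rightarrow> real) \<Rightarrow> ennreal" where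
  "Ph N K TL TR h f E =
     (\<Sum>n. ennreal (exp (- Lam N K * h) * (Lam N K * h) ^ n / fact n) * ((Qop N K TL TR ^^ n) f) E)"

end

(*
  V is a sum of negative powers of the energies of blocks of consecutive sites, so it is large
  exactly when some block carries little energy. Single sites are blocks, so if W is the largest
  term of V then every energy is at least W powr (1 / (eta - 1)), every clock rings at rate at
  least W powr (- 1 / (2 * (1 - eta))), and the term W is lost at the rate of the clock at the left
  end of its block: the loss rate is at least W powr alpha >= (V / #blocks) powr alpha.
  An exchange across the boundary of a block raises its term at most to a power of the energy x
  of the block one site longer, times p powr e + (1 - p) powr e, which is integrable in p.
  Multiplied by the rate, at most sqrt x, this is at most V powr gamma for some gamma < alpha,
  provided eta < 2 powr (- N): this is what the exponents a_m are designed for. Bath events add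
  a bounded amount. Hence the generator applied to V is bounded above, and at most
  - kappa * V powr alpha once V is large. Finally P^h is a Poisson mixture of the powers Q^n of
  the uniformized one-step operator: Q^n V grows at most linearly in n, and the term n = 1
  already carries the decrease.
*)
theory Submission
  imports Defs
begin

section \<open>Integrals against the uniform and the exponential law\<close>

lemma nn_integral_powr_neg_unit_interval:
  fixes b :: real
  assumes "0 \<le> b" "b < 1"
  shows "(\<integral>\<^sup>+ p \<in> {0<..<1}. ennreal (p powr (-b)) \<partial>lborel) \<le> ennreal (1 / (1 - b))"
proof -
  have "((\<lambda>x. x powr (-b)) has_integral (1 powr (-b + 1) / (-b + 1))) {0..1::real}"
    by (rule has_integral_powr_from_0) (use assms in auto)
  then have "(\<integral>\<^sup>+ x. indicator {0..1::real} x * x powr (-b) \<partial>lborel) = ennreal (1 / (1 - b))"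
    by (subst nn_integral_has_integral_lebesgue) auto
  moreover have "(\<integral>\<^sup>+ p \<in> {0<..<1}. ennreal (p powr (-b)) \<partial>lborel)
      \<le> (\<integral>\<^sup>+ x. indicator {0..1::real} x * x powr (-b) \<partial>lborel)"
    by (intro nn_integral_mono) (auto split: split_indicator)
  ultimately show ?thesis by simp
qed

lemma nn_integral_powr_neg_unit_interval_reflected:
  fixes b :: real
  assumes "0 \<le> b" "b < 1"
  shows "(\<integral>\<^sup>+ p \<in> {0<..<1}. ennreal ((1 - p) powr (-b)) \<partial>lborel) \<le> ennreal (1 / (1 - b))"
proof -
  have "(\<integral>\<^sup>+ p. ennreal (p powr (-b)) * indicator {0<..<1} p \<partial>lborel)
      = ennreal \<bar>-1\<bar> * (\<integral>\<^sup>+ p. ennreal ((1 + (-1) * p) powr (-b)) * indicator {0<..<1} (1 + (-1) * p) \<partial>lborel)"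
    by (rule nn_integral_real_affine) auto
  also have "(\<lambda>p. ennreal ((1 + (-1) * p) powr (-b)) * indicator {0<..<1} (1 + (-1) * p))
      = (\<lambda>p::real. ennreal ((1 - p) powr (-b)) * indicator {0<..<1} p)"
    by (auto simp: fun_eq_iff split: split_indicator)
  finally show ?thesis
    using nn_integral_powr_neg_unit_interval[OF assms] by simp
qed

lemma nn_integral_affine_powr_neg_unit_interval:
  fixes b C0 C1 :: real
  assumes "0 \<le> b" "b < 1" "0 \<le> C0" "0 \<le> C1"
  shows "(\<integral>\<^sup>+ p \<in> {0<..<1}. ennreal (C0 + C1 * (p powr (-b) + (1 - p) powr (-b))) \<partial>lborel)
    \<le> ennreal (C0 + C1 * (2 / (1 - b)))"
proof -
  have "(\<integral>\<^sup>+ p \<in> {0<..<1}. ennreal (C0 + C1 * (p powr (-b) + (1 - p) powr (-b))) \<partial>lborel)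
      = (\<integral>\<^sup>+ p. ennreal C0 * indicator {0<..<1::real} p
          + (ennreal C1 * (ennreal (p powr (-b)) * indicator {0<..<1} p)
          + ennreal C1 * (ennreal ((1 - p) powr (-b)) * indicator {0<..<1} p)) \<partial>lborel)"
    using assms
    by (intro nn_integral_cong)
      (auto simp: ennreal_plus[symmetric] ennreal_mult[symmetric] distrib_left
        split: split_indicator simp del: ennreal_plus)
  also have "\<dots> = ennreal C0 + (ennreal C1 * (\<integral>\<^sup>+ p \<in> {0<..<1}. ennreal (p powr (-b)) \<partial>lborel)
      + ennreal C1 * (\<integral>\<^sup>+ p \<in> {0<..<1}. ennreal ((1 - p) powr (-b)) \<partial>lborel))"
    by (simp add: nn_integral_add nn_integral_cmult)
  also have "\<dots> \<le> ennreal C0 + (ennreal C1 * ennreal (1 / (1 - b)) + ennreal C1 * ennreal (1 / (1 - b)))"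
    using nn_integral_powr_neg_unit_interval[OF assms(1,2)]
      nn_integral_powr_neg_unit_interval_reflected[OF assms(1,2)]
    by (intro add_mono mult_left_mono order.refl) auto
  also have "\<dots> = ennreal (C0 + (C1 * (1 / (1 - b)) + C1 * (1 / (1 - b))))"
    using assms by (simp add: ennreal_plus[symmetric] ennreal_mult[symmetric] del: ennreal_plus)
  also have "\<dots> = ennreal (C0 + C1 * (2 / (1 - b)))"
    by (simp add: field_simps)
  finally show ?thesis .
qed

lemma exponential_density_mult_powr_neg_le:
  fixes l b x :: real
  assumes "0 < l" "0 \<le> b"
  shows "exponential_density l x * x powr (-b)
    \<le> exponential_density l x + l * (x powr (-b) * indicator {0<..<1} x)"
proof (cases "0 < x \<and> x < 1")
  case True
  have "exponential_density l x \<le> l"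
    using assms True by (simp add: exponential_density_def)
  then show ?thesis
    using True assms by (simp add: exponential_density_nonneg mult_right_mono add_increasing)
next
  case False
  have "x powr (-b) \<le> 1" if "1 \<le> x"
    using that assms powr_mono[of "-b" 0 x] by simp
  then show ?thesis
    using False assms
    by (cases "x < 0") (auto simp: exponential_density_def not_less mult_left_le)
qed

lemma nn_integral_exponential_density_affine_powr_neg:
  fixes b C0 C2 l :: real
  assumes "0 \<le> b" "b < 1" "0 \<le> C0" "0 \<le> C2" "0 < l"
  shows "(\<integral>\<^sup>+ x. ennreal (exponential_density l x) * ennreal (C0 + C2 * (x powr (-b) + 1)) \<partial>lborel)
    \<le> ennreal (C0 + 2 * C2 + C2 * l / (1 - b))"
proof -
  have dens: "(\<integral>\<^sup>+ x. ennreal (exponential_density l x) \<partial>lborel) = 1"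
    using nn_integral_erlang_ith_moment[of l 0 0] assms by simp
  have "ennreal (exponential_density l x) * ennreal (C0 + C2 * (x powr (-b) + 1))
      \<le> ennreal (C0 + 2 * C2) * ennreal (exponential_density l x)
        + ennreal (C2 * l) * (ennreal (x powr (-b)) * indicator {0<..<1} x)" for x
  proof -
    have "exponential_density l x * (C0 + C2 * (x powr (-b) + 1))
        \<le> (C0 + 2 * C2) * exponential_density l x + (C2 * l) * (x powr (-b) * indicator {0<..<1} x)"
      using mult_left_mono[OF exponential_density_mult_powr_neg_le[OF assms(5,1), of x] assms(4)]
        assms exponential_density_nonneg[of l x]
      by (simp add: algebra_simps)
    then show ?thesis
      using assms exponential_density_nonneg[of l x]
      by (cases "0 < x \<and> x < 1")
        (simp_all add: ennreal_plus[symmetric] ennreal_mult[symmetric] ennreal_leI del: ennreal_plus)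
  qed
  then have "(\<integral>\<^sup>+ x. ennreal (exponential_density l x) * ennreal (C0 + C2 * (x powr (-b) + 1)) \<partial>lborel)
      \<le> ennreal (C0 + 2 * C2) * (\<integral>\<^sup>+ x. ennreal (exponential_density l x) \<partial>lborel)
        + ennreal (C2 * l) * (\<integral>\<^sup>+ x \<in> {0<..<1}. ennreal (x powr (-b)) \<partial>lborel)"
    by (subst (1 2) nn_integral_cmult[symmetric]) (auto intro!: nn_integral_mono simp: nn_integral_add[symmetric])
  also have "\<dots> \<le> ennreal (C0 + 2 * C2) + ennreal (C2 * l) * ennreal (1 / (1 - b))"
    using nn_integral_powr_neg_unit_interval[OF assms(1,2)] dens by (intro add_mono mult_left_mono) auto
  also have "\<dots> = ennreal (C0 + 2 * C2 + C2 * l / (1 - b))"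
    using assms by (simp add: ennreal_plus[symmetric] ennreal_mult[symmetric] del: ennreal_plus)
  finally show ?thesis .
qed

lemma poisson_mixture_le:
  fixes a :: "nat \<Rightarrow> ennreal" and x V B \<delta> :: real
  assumes x: "0 < x" and B: "0 \<le> B" and \<delta>: "0 \<le> \<delta>" "\<delta> \<le> V"
    and a: "\<And>n. a n \<le> ennreal (V + real n * B)" "a 1 \<le> ennreal (V - \<delta>)"
  shows "(\<Sum>n. ennreal (exp (- x) * x ^ n / fact n) * a n) \<le> ennreal (V + exp x * B - x * exp (- x) * \<delta>)"
proof -
  define w where "w n = exp (- x) * x ^ n / fact n" for n
  \<comment> \<open>Bounding \<open>n\<close> by \<open>2 ^ n\<close> lets the linear growth be summed with the exponential series at \<open>2 * x\<close>.\<close>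
  define g where "g n = (if n = 1 then V - \<delta> else V + 2 ^ n * B)" for n :: nat
  define X where "X = exp (- x) * exp x * V + exp (- x) * exp (2 * x) * B - w 1 * (2 * B + \<delta>)"
  have w: "0 \<le> w n" and g: "0 \<le> g n" for n
    using x B \<delta> by (simp_all add: w_def g_def)
  have a_le_g: "a n \<le> ennreal (g n)" for n
  proof (cases "n = 1")
    case False
    have "real n * B \<le> 2 ^ n * B"
      using B less_exp[of n] by (intro mult_right_mono) (simp_all add: less_imp_le)
    then have "ennreal (V + real n * B) \<le> ennreal (g n)"
      using False by (intro ennreal_leI) (simp add: g_def)
    with a(1)[of n] show ?thesis
      by (rule order_trans)
  qed (use a(2) in \<open>simp add: g_def\<close>)
  have exp_sums: "(\<lambda>n. y ^ n / fact n) sums exp y" for y :: real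
    using exp_converges[of y] by (simp add: divide_inverse mult.commute)
  have wg: "w n * g n = exp (- x) * (x ^ n / fact n) * V + exp (- x) * ((2 * x) ^ n / fact n) * B
      - (if n = 1 then w 1 * (2 * B + \<delta>) else 0)" for n
    by (cases "n = 1") (simp_all add: w_def g_def power_mult_distrib add_divide_distrib algebra_simps)
  have "(\<lambda>n. w n * g n) sums X"
    unfolding wg X_def by (intro sums_diff sums_add sums_mult2 sums_mult exp_sums sums_single)
  have "ennreal (w n) * a n \<le> ennreal (w n * g n)" for n
    using mult_left_mono[OF a_le_g[of n], of "ennreal (w n)"] w g by (simp add: ennreal_mult)
  then have "(\<Sum>n. ennreal (exp (- x) * x ^ n / fact n) * a n) \<le> (\<Sum>n. ennreal (w n * g n))"
    unfolding w_def[symmetric] by (intro suminf_le) auto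
  also have "\<dots> = ennreal X"
    using w g \<open>(\<lambda>n. w n * g n) sums X\<close> by (intro suminf_ennreal_eq) auto
  also have "X \<le> V + exp x * B - x * exp (- x) * \<delta>"
    using x B by (simp add: X_def w_def mult_exp_exp algebra_simps)
  then have "ennreal X \<le> ennreal (V + exp x * B - x * exp (- x) * \<delta>)"
    by (rule ennreal_leI)
  finally show ?thesis .
qed

lemma powr_add_scaled_le:
  fixes A s q e :: real
  assumes "0 \<le> A" "0 < s" "0 < q" "q \<le> 1" "e \<le> 0"
  shows "(A + q * s) powr e \<le> q powr e * (A + s) powr e"
proof -
  have "q * (A + s) \<le> A + q * s"
    using assms mult_left_le_one_le[of A q] by (simp add: distrib_left)
  then have "(A + q * s) powr e \<le> (q * (A + s)) powr e"
    using assms by (intro powr_mono2') auto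
  also have "\<dots> = q powr e * (A + s) powr e"
    using assms by (simp add: powr_mult)
  finally show ?thesis .
qed

lemma powr_add_fraction_le:
  fixes A s p q a b :: real
  assumes "0 \<le> A" "0 < s" "0 < p" "p < 1" "q = p \<or> q = 1 - p" "b \<le> a" "a \<le> 0"
  shows "(A + q * s) powr a \<le> (A + s) powr a * (p powr b + (1 - p) powr b)"
proof -
  have q: "0 < q" "q \<le> 1"
    using assms by auto
  have "q powr a \<le> q powr b"
    using q assms by (intro powr_mono') auto
  also have "\<dots> \<le> p powr b + (1 - p) powr b"
    using assms(5) by auto
  finally have "q powr a * (A + s) powr a \<le> (p powr b + (1 - p) powr b) * (A + s) powr a"
    by (rule mult_right_mono) simp
  with powr_add_scaled_le[OF assms(1,2) q assms(7)] show ?thesis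
    by (simp add: mult.commute)
qed

lemma powr_le_powr_add_one:
  fixes x a b :: real
  assumes "0 < x" "a \<le> b" "b \<le> 0"
  shows "x powr b \<le> x powr a + 1"
proof (cases "x \<le> 1")
  case True
  then have "x powr b \<le> x powr a"
    using assms by (intro powr_mono') auto
  then show ?thesis
    by simp
next
  case False
  then have "x powr b \<le> x powr 0"
    using assms by (intro powr_mono) auto
  then show ?thesis
    using False by (simp add: add_increasing)
qed

lemma powr_inverse_exponent_le:
  fixes x e W :: real
  assumes "0 < x" "e < 0" "x powr e \<le> W"
  shows "W powr (1 / e) \<le> x"
proof -
  have "W powr (1 / e) \<le> (x powr e) powr (1 / e)"
    using assms by (intro powr_mono2') (auto simp: divide_nonpos_neg less_imp_le)
  also have "\<dots> = x"
    using assms by (simp add: powr_powr)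
  finally show ?thesis .
qed

lemma powr_half_inverse_le_sqrt:
  fixes y e W :: real
  assumes "0 < y" "e < 0" "y powr e \<le> W"
  shows "W powr (1 / e / 2) \<le> sqrt y"
proof -
  have "0 \<le> W"
    using assms(3) powr_ge_zero[of y e] by linarith
  then have "W powr (1 / e / 2) = sqrt (W powr (1 / e))"
    by (rule powr_half_sqrt_powr)
  also have "\<dots> \<le> sqrt y"
    using powr_inverse_exponent_le[OF assms] by simp
  finally show ?thesis .
qed

lemma powr_le_powr_of_neg_exponents:
  fixes x W e g :: real
  assumes "0 < x" "e < 0" "g < 0" "x powr e \<le> W"
  shows "x powr g \<le> W powr (g / e)"
proof -
  have "x powr g = (x powr e) powr (g / e)"
    using assms by (simp add: powr_powr)
  also have "\<dots> \<le> W powr (g / e)"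
    using assms by (intro powr_mono2) (auto simp: zero_le_divide_iff)
  finally show ?thesis .
qed

lemma mult_powr_divide_le_self:
  fixes \<kappa> L V \<alpha> :: real
  assumes "0 \<le> \<kappa>" "\<kappa> \<le> 1" "1 \<le> L" "1 \<le> V" "\<alpha> \<le> 1"
  shows "\<kappa> * V powr \<alpha> / L \<le> V"
proof -
  have "\<kappa> * V powr \<alpha> \<le> 1 * V powr 1"
    using assms by (intro mult_mono powr_mono) auto
  also have "\<dots> \<le> V * L"
    using assms by (simp add: mult_le_cancel_left1)
  finally show ?thesis
    using assms by (simp add: divide_le_eq)
qed

lemma inverse_two_power_le_half: "1 \<le> N \<Longrightarrow> 1 / 2 ^ N \<le> (1 / 2 :: real)"
  using power_increasing[of 1 N "2::real"] by (simp add: divide_simps)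

lemma eventually_le_mult_powr_at_top:
  fixes C d \<epsilon> :: real
  assumes "0 < d" "0 < \<epsilon>"
  shows "eventually (\<lambda>V. C \<le> \<epsilon> * V powr d) at_top"
proof -
  have "C \<le> \<epsilon> * V powr d" if V: "(\<bar>C\<bar> / \<epsilon>) powr (1 / d) \<le> V" for V
  proof -
    have "\<bar>C\<bar> / \<epsilon> = ((\<bar>C\<bar> / \<epsilon>) powr (1 / d)) powr d"
      using assms by (simp add: powr_powr)
    also have "\<dots> \<le> V powr d"
      using V assms by (intro powr_mono2) auto
    finally show ?thesis
      using assms by (simp add: field_simps)
  qed
  then show ?thesis
    by (auto simp: eventually_at_top_linorder)
qed

lemma eventually_mult_powr_le_mult_powr_at_top:
  fixes C \<gamma> \<alpha> \<epsilon> :: real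
  assumes "\<gamma> < \<alpha>" "0 < \<epsilon>"
  shows "eventually (\<lambda>V. C * V powr \<gamma> \<le> \<epsilon> * V powr \<alpha>) at_top"
proof -
  have "eventually (\<lambda>V. C \<le> \<epsilon> * V powr (\<alpha> - \<gamma>)) at_top"
    using assms by (intro eventually_le_mult_powr_at_top) auto
  with eventually_gt_at_top[of 0] show ?thesis
  proof eventually_elim
    case (elim V)
    then have "C * V powr \<gamma> \<le> (\<epsilon> * V powr (\<alpha> - \<gamma>)) * V powr \<gamma>"
      by (intro mult_right_mono) auto
    also have "\<dots> = \<epsilon> * V powr \<alpha>"
      using elim by (simp add: powr_add[symmetric] mult.assoc)
    finally show ?case .
  qed
qed

lemma sum_fun_upd:
  fixes f :: "'a \<Rightarrow> 'b::ab_group_add"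
  assumes "finite S"
  shows "(\<Sum>j\<in>S. (f(a := u)) j) = (\<Sum>j\<in>S. f j) + (if a \<in> S then u - f a else 0)"
proof -
  have "(f(a := u)) j = f j + (if a = j then u - f a else 0)" for j
    by simp
  then show ?thesis
    using assms by (simp add: sum.distrib)
qed

lemma sum_if_replace:
  fixes X Y :: "'a \<Rightarrow> real"
  shows "(\<Sum>x\<in>S. if P x then X x * g else Y x)
    = (\<Sum>x\<in>S. Y x) - (\<Sum>x\<in>S. if P x then Y x else 0) + (\<Sum>x\<in>S. if P x then X x else 0) * g"
  by (subst sum.cong[OF refl, of S _ "\<lambda>x. Y x - (if P x then Y x else 0) + (if P x then X x else 0) * g"])
    (auto simp: sum.distrib sum_subtractf sum_distrib_right)

lemma uniformized_average_le:
  fixes r d :: "'a \<Rightarrow> real" and I :: "'a \<Rightarrow> ennreal"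
  assumes S: "finite S" and r: "\<And>i. i \<in> S \<Longrightarrow> 0 \<le> r i"
    and I: "\<And>i. i \<in> S \<Longrightarrow> I i \<le> ennreal (W + d i)" "\<And>i. i \<in> S \<Longrightarrow> 0 \<le> W + d i"
    and left: "0 \<le> rL" "IL \<le> ennreal (W + dL)" "0 \<le> W + dL"
    and right: "0 \<le> rR" "IR \<le> ennreal (W + dR)" "0 \<le> W + dR"
    and L: "0 < L" "(\<Sum>i\<in>S. r i) + rL + rR \<le> L" and W: "0 \<le> W"
  shows "ennreal (1 / L) * ((\<Sum>i\<in>S. ennreal (r i) * I i) + ennreal rL * IL + ennreal rR * IR
      + ennreal (L - ((\<Sum>i\<in>S. r i) + rL + rR)) * ennreal W)
    \<le> ennreal (W + ((\<Sum>i\<in>S. r i * d i) + rL * dL + rR * dR) / L)"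
proof -
  define tot where "tot = (\<Sum>i\<in>S. r i) + rL + rR"
  have scaled: "ennreal a * J \<le> ennreal (a * Z)" if "0 \<le> a" "J \<le> ennreal Z" for a J Z
    using that by (simp add: ennreal_mult' mult_left_mono)
  have "(\<Sum>i\<in>S. ennreal (r i) * I i) \<le> ennreal (\<Sum>i\<in>S. r i * (W + d i))"
  proof -
    have "(\<Sum>i\<in>S. ennreal (r i) * I i) \<le> (\<Sum>i\<in>S. ennreal (r i * (W + d i)))"
      using r I by (intro sum_mono scaled) auto
    also have "\<dots> = ennreal (\<Sum>i\<in>S. r i * (W + d i))"
      using r I by (intro sum_ennreal) auto
    finally show ?thesis .
  qed
  then have "ennreal (1 / L) * ((\<Sum>i\<in>S. ennreal (r i) * I i) + ennreal rL * IL + ennreal rR * IR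
        + ennreal (L - tot) * ennreal W)
      \<le> ennreal (1 / L) * (ennreal (\<Sum>i\<in>S. r i * (W + d i)) + ennreal (rL * (W + dL))
        + ennreal (rR * (W + dR)) + ennreal ((L - tot) * W))"
    using left right L W
    by (intro mult_left_mono add_mono scaled) (auto simp: tot_def ennreal_mult)
  also have "\<dots> = ennreal (((\<Sum>i\<in>S. r i * (W + d i)) + rL * (W + dL) + rR * (W + dR) + (L - tot) * W) / L)"
    using r I left right L W
    by (simp add: ennreal_plus[symmetric] ennreal_mult[symmetric] sum_nonneg tot_def del: ennreal_plus)
  also have "((\<Sum>i\<in>S. r i * (W + d i)) + rL * (W + dL) + rR * (W + dR) + (L - tot) * W) / L
      = W + ((\<Sum>i\<in>S. r i * d i) + rL * dL + rR * dR) / L"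
    using L by (simp add: tot_def distrib_left sum.distrib sum_distrib_left[symmetric] field_simps)
  finally show ?thesis
    by (simp add: tot_def)
qed

section \<open>Blocks and the Lyapunov function\<close>

definition blocks :: "nat \<Rightarrow> (nat \<times> nat) set" where
  "blocks N = Sigma {1..N} (\<lambda>m. {1..N - m + 1})"

definition block_sum :: "(nat \<Rightarrow> real) \<Rightarrow> nat \<Rightarrow> nat \<Rightarrow> real" where
  "block_sum E m k = (\<Sum>j<m. E (k + j))"

definition in_block :: "nat \<Rightarrow> nat \<Rightarrow> nat \<Rightarrow> bool" where
  "in_block j m k \<longleftrightarrow> k \<le> j \<and> j < k + m"

definition positive_state :: "nat \<Rightarrow> (nat \<Rightarrow> real) \<Rightarrow> bool" where
  "positive_state N E \<longleftrightarrow> (\<forall>i\<in>{1..N}. 0 < E i)"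

definition block_exp :: "nat \<Rightarrow> real \<Rightarrow> nat \<Rightarrow> real" where
  "block_exp N \<eta> m = a_exp N m * \<eta> - 1"

lemma finite_blocks [simp]: "finite (blocks N)"
  by (simp add: blocks_def)

lemma mem_blocks_iff: "(m, k) \<in> blocks N \<longleftrightarrow> 1 \<le> m \<and> m \<le> N \<and> 1 \<le> k \<and> k + m \<le> Suc N"
  by (auto simp: blocks_def)

lemma card_blocks_ge_one: "1 \<le> N \<Longrightarrow> 1 \<le> card (blocks N)"
  using card_gt_0_iff[of "blocks N"] mem_blocks_iff[of 1 1 N] by fastforce

lemma Vfun_eq_sum_blocks: "Vfun N \<eta> E = (\<Sum>(m, k)\<in>blocks N. Vm N \<eta> m k E)"
  unfolding Vfun_def blocks_def by (subst sum.Sigma) auto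

lemma Vm_eq_block_sum_powr: "Vm N \<eta> m k E = block_sum E m k powr block_exp N \<eta> m"
  by (simp add: Vm_def block_sum_def block_exp_def)

lemma Vm_nonneg: "0 \<le> Vm N \<eta> m k E"
  by (simp add: Vm_def)

lemma Vfun_nonneg: "0 \<le> Vfun N \<eta> E"
  by (simp add: Vfun_eq_sum_blocks split_def sum_nonneg Vm_nonneg)

lemma Vm_le_Vfun: "(m, k) \<in> blocks N \<Longrightarrow> Vm N \<eta> m k E \<le> Vfun N \<eta> E"
  unfolding Vfun_eq_sum_blocks
  by (rule member_le_sum[of "(m, k)" _ "\<lambda>(m, k). Vm N \<eta> m k E", simplified])
    (auto simp: Vm_nonneg)

lemma block_sum_eq_sum_interval: "block_sum E m k = (\<Sum>j\<in>{k..<k + m}. E j)"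
  unfolding block_sum_def by (induction m) auto

lemma block_sum_Suc: "block_sum E (Suc m) k = block_sum E m k + E (k + m)"
  by (simp add: block_sum_def)

lemma block_sum_Suc_left: "block_sum E (Suc m) k = E k + block_sum E m (Suc k)"
  unfolding block_sum_def by (induction m) (simp_all add: add_ac)

lemma block_sum_fun_upd:
  "block_sum (E(j := u)) m k = block_sum E m k + (if in_block j m k then u - E j else 0)"
  by (simp add: block_sum_eq_sum_interval sum_fun_upd in_block_def del: fun_upd_apply)

lemma block_sum_ge:
  assumes "positive_state N E" "(m, k) \<in> blocks N" "in_block j m k"
  shows "E j \<le> block_sum E m k"
  unfolding block_sum_eq_sum_interval
  using assms by (intro member_le_sum)
    (auto simp: mem_blocks_iff positive_state_def in_block_def intro!: less_imp_le)

lemma block_sum_pos: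
  assumes "positive_state N E" "(m, k) \<in> blocks N"
  shows "0 < block_sum E m k"
proof -
  have "0 < E k" "in_block k m k"
    using assms by (auto simp: mem_blocks_iff positive_state_def in_block_def)
  then show ?thesis
    using block_sum_ge[OF assms] by fastforce
qed

lemma a_exp_bounds:
  assumes "1 \<le> m" "m \<le> N"
  shows "0 < a_exp N m" "a_exp N m \<le> 1" "a_exp N N \<le> a_exp N m"
proof -
  have p1: "(1::real) \<le> 2 ^ (m - 1)"
    by simp
  have p2: "(2::real) ^ (m - 1) \<le> 2 ^ (N - 1)"
    using assms by (intro power_increasing) auto
  have p3: "(2::real) ^ (N - 1) < 2 ^ N"
    using assms by (intro power_strict_increasing) auto
  then show "0 < a_exp N m"
    using p2 by (simp add: a_exp_def divide_less_eq)
  show "a_exp N m \<le> 1"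
    using p1 p3 by (simp add: a_exp_def)
  show "a_exp N N \<le> a_exp N m"
    using p2 p3 p1 unfolding a_exp_def by (intro diff_left_mono divide_right_mono) auto
qed

lemma block_exp_bounds:
  assumes "1 \<le> m" "m \<le> N" "0 < \<eta>" "\<eta> < 1/2"
  shows "-1 < block_exp N \<eta> m" "block_exp N \<eta> m < -1/2" "block_exp N \<eta> N \<le> block_exp N \<eta> m"
proof -
  note a = a_exp_bounds[OF assms(1,2)]
  have "a_exp N m * \<eta> \<le> \<eta>" "a_exp N N * \<eta> \<le> a_exp N m * \<eta>"
    using a assms mult_right_mono by (metis less_eq_real_def mult_1)+
  moreover have "0 < a_exp N m * \<eta>"
    using a assms by simp
  ultimately show "-1 < block_exp N \<eta> m" "block_exp N \<eta> m < -1/2" "block_exp N \<eta> N \<le> block_exp N \<eta> m"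
    using assms unfolding block_exp_def by linarith+
qed

section \<open>An exchange between neighbouring sites\<close>

definition exchange :: "nat \<Rightarrow> real \<Rightarrow> (nat \<Rightarrow> real) \<Rightarrow> nat \<Rightarrow> real" where
  "exchange i p E = E(i := p * (E i + E (Suc i)), Suc i := (1 - p) * (E i + E (Suc i)))"

definition cut_by_bond :: "nat \<Rightarrow> nat \<Rightarrow> nat \<Rightarrow> bool" where
  "cut_by_bond i m k \<longleftrightarrow> in_block i m k \<noteq> in_block (Suc i) m k"

lemma block_sum_exchange:
  "block_sum (exchange i p E) m k = block_sum E m k
     + (if in_block i m k then p * (E i + E (Suc i)) - E i else 0)
     + (if in_block (Suc i) m k then (1 - p) * (E i + E (Suc i)) - E (Suc i) else 0)"
  by (simp only: exchange_def block_sum_fun_upd) simp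

lemma positive_state_exchange:
  assumes "positive_state N E" "1 \<le> i" "Suc i \<le> N" "0 < p" "p < 1"
  shows "positive_state N (exchange i p E)"
  using assms unfolding positive_state_def exchange_def by (auto intro!: mult_pos_pos add_pos_pos)

lemma block_sum_exchange_cut:
  assumes pos: "positive_state N E" and blk: "(m, k) \<in> blocks N" and cut: "cut_by_bond i m k"
  obtains A q where "0 \<le> A" "q = p \<or> q = 1 - p"
    "block_sum (exchange i p E) m k = A + q * (E i + E (Suc i))"
    "block_sum E (Suc m) (min k i) = A + (E i + E (Suc i))"
proof -
  consider "in_block i m k" "k + m = Suc i" | "in_block (Suc i) m k" "k = Suc i"
    using cut by (auto simp: cut_by_bond_def in_block_def le_Suc_eq)
  then show ?thesis
  proof cases
    case 1
    then show ?thesis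
      using that[of "block_sum E m k - E i" p] block_sum_ge[OF pos blk 1(1)]
      by (auto simp: block_sum_exchange block_sum_Suc in_block_def)
  next
    case 2
    then show ?thesis
      using that[of "block_sum E m k - E (Suc i)" "1 - p"] block_sum_ge[OF pos blk 2(1)]
      by (auto simp: block_sum_exchange block_sum_Suc_left in_block_def)
  qed
qed

lemma Vm_exchange_le:
  assumes pos: "positive_state N E" and i: "1 \<le> i" "Suc i \<le> N" and blk: "(m, k) \<in> blocks N"
    and p: "0 < p" "p < 1" and \<eta>: "0 < \<eta>" "\<eta> < 1/2"
  shows "Vm N \<eta> m k (exchange i p E) \<le> (if cut_by_bond i m k
      then block_sum E (Suc m) (min k i) powr block_exp N \<eta> m
        * (p powr block_exp N \<eta> N + (1 - p) powr block_exp N \<eta> N)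
      else Vm N \<eta> m k E)"
proof (cases "cut_by_bond i m k")
  case False
  then have "block_sum (exchange i p E) m k = block_sum E m k"
    by (cases "in_block i m k") (simp_all add: block_sum_exchange cut_by_bond_def algebra_simps)
  then show ?thesis
    using False by (simp add: Vm_eq_block_sum_powr)
next
  case True
  obtain A q where A: "0 \<le> A" "q = p \<or> q = 1 - p"
    and sums: "block_sum (exchange i p E) m k = A + q * (E i + E (Suc i))"
      "block_sum E (Suc m) (min k i) = A + (E i + E (Suc i))"
    using block_sum_exchange_cut[OF pos blk True] .
  have "(A + q * (E i + E (Suc i))) powr block_exp N \<eta> m
      \<le> (A + (E i + E (Suc i))) powr block_exp N \<eta> m
        * (p powr block_exp N \<eta> N + (1 - p) powr block_exp N \<eta> N)"
    using A p pos i blk block_exp_bounds[of m N, OF _ _ \<eta>]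
    by (intro powr_add_fraction_le) (auto simp: positive_state_def mem_blocks_iff intro!: add_pos_pos)
  then show ?thesis
    using True sums by (simp add: Vm_eq_block_sum_powr)
qed

definition exchange_loss :: "nat \<Rightarrow> real \<Rightarrow> nat \<Rightarrow> (nat \<Rightarrow> real) \<Rightarrow> real" where
  "exchange_loss N \<eta> i E = (\<Sum>(m, k)\<in>blocks N. if cut_by_bond i m k then Vm N \<eta> m k E else 0)"

definition exchange_gain :: "nat \<Rightarrow> real \<Rightarrow> nat \<Rightarrow> (nat \<Rightarrow> real) \<Rightarrow> real" where
  "exchange_gain N \<eta> i E = (\<Sum>(m, k)\<in>blocks N.
     if cut_by_bond i m k then block_sum E (Suc m) (min k i) powr block_exp N \<eta> m else 0)"

lemma exchange_loss_bounds: "0 \<le> exchange_loss N \<eta> i E" "exchange_loss N \<eta> i E \<le> Vfun N \<eta> E"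
  unfolding exchange_loss_def Vfun_eq_sum_blocks split_def
  by (auto intro!: sum_nonneg sum_mono simp: Vm_nonneg)

lemma exchange_gain_nonneg: "0 \<le> exchange_gain N \<eta> i E"
  unfolding exchange_gain_def split_def by (auto intro!: sum_nonneg)

lemma Vfun_exchange_le:
  assumes "positive_state N E" "1 \<le> i" "Suc i \<le> N" "0 < p" "p < 1" "0 < \<eta>" "\<eta> < 1/2"
  shows "Vfun N \<eta> (exchange i p E) \<le> Vfun N \<eta> E - exchange_loss N \<eta> i E
    + exchange_gain N \<eta> i E * (p powr block_exp N \<eta> N + (1 - p) powr block_exp N \<eta> N)"
proof -
  have "Vfun N \<eta> (exchange i p E) \<le> (\<Sum>(m, k)\<in>blocks N. if cut_by_bond i m k
      then block_sum E (Suc m) (min k i) powr block_exp N \<eta> m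
        * (p powr block_exp N \<eta> N + (1 - p) powr block_exp N \<eta> N)
      else Vm N \<eta> m k E)"
    unfolding Vfun_eq_sum_blocks split_def
    using assms by (intro sum_mono Vm_exchange_le) auto
  also have "\<dots> = Vfun N \<eta> E - exchange_loss N \<eta> i E
    + exchange_gain N \<eta> i E * (p powr block_exp N \<eta> N + (1 - p) powr block_exp N \<eta> N)"
    unfolding Vfun_eq_sum_blocks exchange_loss_def exchange_gain_def split_def
    by (rule sum_if_replace)
  finally show ?thesis .
qed

lemma nn_integral_Vfun_exchange_le:
  assumes pos: "positive_state N E" and i: "1 \<le> i" "Suc i \<le> N" and \<eta>: "0 < \<eta>" "\<eta> < 1/2"
    and c: "0 \<le> c"
  shows "(\<integral>\<^sup>+ p \<in> {0<..<1}. ennreal (Vfun N \<eta> (exchange i p E) + c) \<partial>lborel)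
    \<le> ennreal (Vfun N \<eta> E + c
      + (exchange_gain N \<eta> i E * (2 / (1 + block_exp N \<eta> N)) - exchange_loss N \<eta> i E))"
proof -
  let ?b = "- block_exp N \<eta> N"
  note e = block_exp_bounds[of N N, OF _ order.refl \<eta>]
  have "(\<integral>\<^sup>+ p \<in> {0<..<1}. ennreal (Vfun N \<eta> (exchange i p E) + c) \<partial>lborel)
      \<le> (\<integral>\<^sup>+ p \<in> {0<..<1}. ennreal ((Vfun N \<eta> E - exchange_loss N \<eta> i E + c)
        + exchange_gain N \<eta> i E * (p powr (- ?b) + (1 - p) powr (- ?b))) \<partial>lborel)"
  proof (intro nn_integral_mono)
    fix p :: real
    have "Vfun N \<eta> (exchange i p E) + c \<le> Vfun N \<eta> E - exchange_loss N \<eta> i E + c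
        + exchange_gain N \<eta> i E * (p powr (- ?b) + (1 - p) powr (- ?b))"
      if "0 < p" "p < 1"
      using Vfun_exchange_le[OF pos i that \<eta>] by simp
    then show "ennreal (Vfun N \<eta> (exchange i p E) + c) * indicator {0<..<1} p
        \<le> ennreal (Vfun N \<eta> E - exchange_loss N \<eta> i E + c
          + exchange_gain N \<eta> i E * (p powr (- ?b) + (1 - p) powr (- ?b))) * indicator {0<..<1} p"
      by (auto split: split_indicator intro!: ennreal_leI)
  qed
  also have "\<dots> \<le> ennreal ((Vfun N \<eta> E - exchange_loss N \<eta> i E + c)
      + exchange_gain N \<eta> i E * (2 / (1 - ?b)))"
    using e i exchange_loss_bounds[of N \<eta> i E] exchange_gain_nonneg[of N \<eta> i E] c
    by (intro nn_integral_affine_powr_neg_unit_interval) auto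
  finally show ?thesis
    by (simp add: algebra_simps)
qed

section \<open>An exchange with a bath\<close>

lemma positive_state_bath:
  assumes "positive_state N E" "1 \<le> j" "j \<le> N" "0 \<le> x" "0 < p"
  shows "positive_state N (E(j := p * (E j + x)))"
  using assms unfolding positive_state_def by (auto intro!: mult_pos_pos add_pos_nonneg)

lemma Vm_bath_le:
  assumes pos: "positive_state N E" and j: "1 \<le> j" "j \<le> N" and blk: "(m, k) \<in> blocks N"
    and p: "0 < p" "p < 1" and x: "0 < x" and \<eta>: "0 < \<eta>" "\<eta> < 1/2"
  shows "Vm N \<eta> m k (E(j := p * (E j + x))) \<le> (if in_block j m k
      then p powr block_exp N \<eta> N * (x powr block_exp N \<eta> N + 1) else Vm N \<eta> m k E)"
proof (cases "in_block j m k")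
  case False
  then show ?thesis
    by (simp add: Vm_eq_block_sum_powr block_sum_fun_upd)
next
  case True
  have m: "1 \<le> m" "m \<le> N"
    using blk by (auto simp: mem_blocks_iff)
  note e = block_exp_bounds[OF m \<eta>] block_exp_bounds[of N N, OF _ order.refl \<eta>]
  have A: "0 \<le> block_sum E m k - E j" and Ej: "0 < E j"
    using block_sum_ge[OF pos blk True] pos j by (auto simp: positive_state_def)
  have "Vm N \<eta> m k (E(j := p * (E j + x))) = (block_sum E m k - E j + p * E j + p * x) powr block_exp N \<eta> m"
    using True by (simp add: Vm_eq_block_sum_powr block_sum_fun_upd algebra_simps)
  also have "\<dots> \<le> (p * x) powr block_exp N \<eta> m"
    using A Ej p x e by (intro powr_mono2') auto
  also have "\<dots> = p powr block_exp N \<eta> m * x powr block_exp N \<eta> m"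
    using p x by (simp add: powr_mult)
  also have "\<dots> \<le> p powr block_exp N \<eta> N * (x powr block_exp N \<eta> N + 1)"
    using p x e m by (intro mult_mono powr_mono' powr_le_powr_add_one) auto
  finally show ?thesis
    using True by simp
qed

definition bath_loss :: "nat \<Rightarrow> real \<Rightarrow> nat \<Rightarrow> (nat \<Rightarrow> real) \<Rightarrow> real" where
  "bath_loss N \<eta> j E = (\<Sum>(m, k)\<in>blocks N. if in_block j m k then Vm N \<eta> m k E else 0)"

definition block_count :: "nat \<Rightarrow> nat \<Rightarrow> real" where
  "block_count N j = (\<Sum>(m, k)\<in>blocks N. if in_block j m k then 1 else 0)"

lemma bath_loss_bounds: "0 \<le> bath_loss N \<eta> j E" "bath_loss N \<eta> j E \<le> Vfun N \<eta> E"
  unfolding bath_loss_def Vfun_eq_sum_blocks split_def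
  by (auto intro!: sum_nonneg sum_mono simp: Vm_nonneg)

lemma block_count_nonneg: "0 \<le> block_count N j"
  unfolding block_count_def split_def by (auto intro!: sum_nonneg)

lemma Vfun_bath_le:
  assumes "positive_state N E" "1 \<le> j" "j \<le> N" "0 < p" "p < 1" "0 < x" "0 < \<eta>" "\<eta> < 1/2"
  shows "Vfun N \<eta> (E(j := p * (E j + x))) \<le> Vfun N \<eta> E - bath_loss N \<eta> j E
    + block_count N j * (p powr block_exp N \<eta> N * (x powr block_exp N \<eta> N + 1))"
proof -
  have "Vfun N \<eta> (E(j := p * (E j + x))) \<le> (\<Sum>(m, k)\<in>blocks N. if in_block j m k
      then 1 * (p powr block_exp N \<eta> N * (x powr block_exp N \<eta> N + 1)) else Vm N \<eta> m k E)"
    unfolding Vfun_eq_sum_blocks split_def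
    using assms by (intro sum_mono) (simp only: mult_1, rule Vm_bath_le, auto)
  also have "\<dots> = Vfun N \<eta> E - bath_loss N \<eta> j E
    + block_count N j * (p powr block_exp N \<eta> N * (x powr block_exp N \<eta> N + 1))"
    unfolding Vfun_eq_sum_blocks bath_loss_def block_count_def split_def
    by (rule sum_if_replace)
  finally show ?thesis .
qed

definition bath_gain :: "nat \<Rightarrow> real \<Rightarrow> real \<Rightarrow> nat \<Rightarrow> real" where
  "bath_gain N \<eta> T j = block_count N j * (2 / (1 + block_exp N \<eta> N))
     * (2 + 1 / (T * (1 + block_exp N \<eta> N)))"

lemma bath_gain_nonneg:
  assumes "1 \<le> N" "0 < T" "0 < \<eta>" "\<eta> < 1/2"
  shows "0 \<le> bath_gain N \<eta> T j"
proof -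
  have "0 < 1 + block_exp N \<eta> N"
    using block_exp_bounds[of N N \<eta>] assms by simp
  then show ?thesis
    unfolding bath_gain_def using block_count_nonneg[of N j] assms
    by (intro mult_nonneg_nonneg add_nonneg_nonneg divide_nonneg_pos) auto
qed

lemma nn_integral_Vfun_bath_uniform_le:
  assumes pos: "positive_state N E" and j: "1 \<le> j" "j \<le> N" and \<eta>: "0 < \<eta>" "\<eta> < 1/2"
    and c: "0 \<le> c" and x: "0 < x"
  shows "(\<integral>\<^sup>+ p \<in> {0<..<1}. ennreal (Vfun N \<eta> (E(j := p * (E j + x))) + c) \<partial>lborel)
    \<le> ennreal (Vfun N \<eta> E - bath_loss N \<eta> j E + c
      + block_count N j * (2 / (1 + block_exp N \<eta> N)) * (x powr block_exp N \<eta> N + 1))"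
proof -
  let ?b = "- block_exp N \<eta> N"
  define C0 where "C0 = Vfun N \<eta> E - bath_loss N \<eta> j E + c"
  define B where "B = block_count N j * (x powr (- ?b) + 1)"
  have C0: "0 \<le> C0" and B: "0 \<le> B"
    using bath_loss_bounds[of N \<eta> j E] c block_count_nonneg[of N j] by (simp_all add: C0_def B_def)
  have "(\<integral>\<^sup>+ p \<in> {0<..<1}. ennreal (Vfun N \<eta> (E(j := p * (E j + x))) + c) \<partial>lborel)
      \<le> (\<integral>\<^sup>+ p \<in> {0<..<1}. ennreal (C0 + B * (p powr (- ?b) + (1 - p) powr (- ?b))) \<partial>lborel)"
  proof (intro nn_integral_mono)
    fix p :: real
    have "Vfun N \<eta> (E(j := p * (E j + x))) + c \<le> C0 + B * (p powr (- ?b) + (1 - p) powr (- ?b))"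
      if "0 < p" "p < 1"
    proof -
      have "Vfun N \<eta> (E(j := p * (E j + x))) + c \<le> C0 + B * p powr (- ?b)"
        using Vfun_bath_le[OF pos j that x \<eta>] by (simp add: C0_def B_def mult_ac)
      also have "\<dots> \<le> C0 + B * (p powr (- ?b) + (1 - p) powr (- ?b))"
        using B by (intro add_left_mono mult_left_mono) auto
      finally show ?thesis .
    qed
    then show "ennreal (Vfun N \<eta> (E(j := p * (E j + x))) + c) * indicator {0<..<1} p
        \<le> ennreal (C0 + B * (p powr (- ?b) + (1 - p) powr (- ?b))) * indicator {0<..<1} p"
      by (auto split: split_indicator intro!: ennreal_leI)
  qed
  also have "\<dots> \<le> ennreal (C0 + B * (2 / (1 - ?b)))"
    using block_exp_bounds[of N N, OF _ order.refl \<eta>] j C0 B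
    by (intro nn_integral_affine_powr_neg_unit_interval) auto
  also have "C0 + B * (2 / (1 - ?b)) = Vfun N \<eta> E - bath_loss N \<eta> j E + c
      + block_count N j * (2 / (1 + block_exp N \<eta> N)) * (x powr block_exp N \<eta> N + 1)"
    by (simp add: C0_def B_def)
  finally show ?thesis .
qed

lemma nn_integral_Vfun_bath_le:
  assumes pos: "positive_state N E" and j: "1 \<le> j" "j \<le> N" and \<eta>: "0 < \<eta>" "\<eta> < 1/2"
    and c: "0 \<le> c" and T: "0 < T"
  shows "(\<integral>\<^sup>+ x. ennreal (exponential_density (1 / T) x)
      * (\<integral>\<^sup>+ p \<in> {0<..<1}. ennreal (Vfun N \<eta> (E(j := p * (E j + x))) + c) \<partial>lborel) \<partial>lborel)
    \<le> ennreal (Vfun N \<eta> E + c + (bath_gain N \<eta> T j - bath_loss N \<eta> j E))"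
proof -
  let ?b = "- block_exp N \<eta> N"
  note e = block_exp_bounds[of N N, OF _ order.refl \<eta>]
  define C0 where "C0 = Vfun N \<eta> E - bath_loss N \<eta> j E + c"
  define C2 where "C2 = block_count N j * (2 / (1 - ?b))"
  have C0: "0 \<le> C0" and C2: "0 \<le> C2"
    using bath_loss_bounds[of N \<eta> j E] c block_count_nonneg[of N j] e j by (simp_all add: C0_def C2_def)
  have "(\<integral>\<^sup>+ x. ennreal (exponential_density (1 / T) x)
      * (\<integral>\<^sup>+ p \<in> {0<..<1}. ennreal (Vfun N \<eta> (E(j := p * (E j + x))) + c) \<partial>lborel) \<partial>lborel)
    \<le> (\<integral>\<^sup>+ x. ennreal (exponential_density (1 / T) x) * ennreal (C0 + C2 * (x powr (- ?b) + 1)) \<partial>lborel)"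
  proof (rule nn_integral_mono_AE, rule AE_mp[OF AE_lborel_singleton[of 0]], rule AE_I2, rule impI)
    fix x :: real
    assume "x \<noteq> 0"
    then show "ennreal (exponential_density (1 / T) x)
        * (\<integral>\<^sup>+ p \<in> {0<..<1}. ennreal (Vfun N \<eta> (E(j := p * (E j + x))) + c) \<partial>lborel)
      \<le> ennreal (exponential_density (1 / T) x) * ennreal (C0 + C2 * (x powr (- ?b) + 1))"
    proof (cases "x < 0")
      case False
      then show ?thesis
        using nn_integral_Vfun_bath_uniform_le[OF pos j \<eta> c, of x] \<open>x \<noteq> 0\<close>
        by (intro mult_left_mono) (auto simp: C0_def C2_def)
    qed (simp add: exponential_density_def)
  qed
  also have "\<dots> \<le> ennreal (C0 + 2 * C2 + C2 * (1 / T) / (1 - ?b))"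
    using e j C0 C2 T by (intro nn_integral_exponential_density_affine_powr_neg) auto
  also have "C0 + 2 * C2 + C2 * (1 / T) / (1 - ?b)
      = Vfun N \<eta> E + c + (bath_gain N \<eta> T j - bath_loss N \<eta> j E)"
    by (simp add: C0_def C2_def bath_gain_def distrib_left)
  finally show ?thesis .
qed

section \<open>One step of the uniformized chain\<close>

lemma rateR_nonneg: "0 \<le> K \<Longrightarrow> 0 \<le> a \<Longrightarrow> 0 \<le> b \<Longrightarrow> 0 \<le> rateR K a b"
  by (simp add: rateR_def)

lemma rateR_le: "rateR K a b \<le> K" "rateR K a b \<le> sqrt a" "rateR K a b \<le> sqrt b"
  by (simp_all add: rateR_def min_le_iff_disj)

lemma le_rateR: "\<rho> \<le> K \<Longrightarrow> \<rho> \<le> sqrt a \<Longrightarrow> \<rho> \<le> sqrt b \<Longrightarrow> \<rho> \<le> rateR K a b"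
  by (simp add: rateR_def min_def)

lemma total_rate_le_Lam:
  assumes "0 \<le> K" "1 \<le> N"
  shows "total_rate N K TL TR E \<le> Lam N K"
proof -
  have "(\<Sum>i = 1..N - 1. rateR K (E i) (E (Suc i))) \<le> real (N - 1) * K"
    using sum_mono[of "{1..N - 1}" "\<lambda>i. rateR K (E i) (E (Suc i))" "\<lambda>_. K"] rateR_le(1) by simp
  moreover have "rateR K TL (E 1) \<le> K" "rateR K (E N) TR \<le> K"
    by (rule rateR_le)+
  ultimately show ?thesis
    using assms by (simp add: total_rate_def Lam_def of_nat_diff algebra_simps)
qed

lemma Qop_mono:
  assumes pos: "positive_state N E" and N: "1 \<le> N"
    and fg: "\<And>F. positive_state N F \<Longrightarrow> f F \<le> g F"
  shows "Qop N K TL TR f E \<le> Qop N K TL TR g E"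
proof -
  have exch: "(\<integral>\<^sup>+ p \<in> {0<..<1}. f (exchange i p E) \<partial>lborel) \<le> (\<integral>\<^sup>+ p \<in> {0<..<1}. g (exchange i p E) \<partial>lborel)"
    if "i \<in> {1..N - 1}" for i
    using that pos fg positive_state_exchange[OF pos]
    by (intro nn_integral_mono) (auto split: split_indicator)
  have bath: "(\<integral>\<^sup>+ x. ennreal (exponential_density l x) * (\<integral>\<^sup>+ p \<in> {0<..<1}. f (E(j := p * (E j + x))) \<partial>lborel) \<partial>lborel)
      \<le> (\<integral>\<^sup>+ x. ennreal (exponential_density l x) * (\<integral>\<^sup>+ p \<in> {0<..<1}. g (E(j := p * (E j + x))) \<partial>lborel) \<partial>lborel)"
    if "1 \<le> j" "j \<le> N" for j l
  proof (intro nn_integral_mono)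
    fix x :: real
    have "(\<integral>\<^sup>+ p \<in> {0<..<1}. f (E(j := p * (E j + x))) \<partial>lborel)
        \<le> (\<integral>\<^sup>+ p \<in> {0<..<1}. g (E(j := p * (E j + x))) \<partial>lborel)" if "0 \<le> x"
      using that \<open>1 \<le> j\<close> \<open>j \<le> N\<close> fg positive_state_bath[OF pos]
      by (intro nn_integral_mono) (auto split: split_indicator)
    then show "ennreal (exponential_density l x) * (\<integral>\<^sup>+ p \<in> {0<..<1}. f (E(j := p * (E j + x))) \<partial>lborel)
        \<le> ennreal (exponential_density l x) * (\<integral>\<^sup>+ p \<in> {0<..<1}. g (E(j := p * (E j + x))) \<partial>lborel)"
      by (cases "x < 0") (auto simp: exponential_density_def intro: mult_left_mono)
  qed
  show ?thesis
    unfolding Qop_def exchange_def[symmetric]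
    using exch bath[of 1] bath[of N] N fg[OF pos]
    by (intro mult_left_mono add_mono sum_mono) auto
qed

definition drift_bound :: "nat \<Rightarrow> real \<Rightarrow> real \<Rightarrow> real \<Rightarrow> real \<Rightarrow> (nat \<Rightarrow> real) \<Rightarrow> real" where
  "drift_bound N \<eta> K TL TR E =
     (\<Sum>i = 1..N - 1. rateR K (E i) (E (Suc i))
        * (exchange_gain N \<eta> i E * (2 / (1 + block_exp N \<eta> N)) - exchange_loss N \<eta> i E))
     + rateR K TL (E 1) * (bath_gain N \<eta> TL 1 - bath_loss N \<eta> 1 E)
     + rateR K (E N) TR * (bath_gain N \<eta> TR N - bath_loss N \<eta> N E)"

lemma Qop_Vfun_le:
  assumes pos: "positive_state N E" and N: "1 \<le> N" and \<eta>: "0 < \<eta>" "\<eta> < 1/2" and K: "1 \<le> K"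
    and T: "0 < TL" "0 < TR" and c: "0 \<le> c"
  shows "Qop N K TL TR (\<lambda>F. ennreal (Vfun N \<eta> F + c)) E
    \<le> ennreal (Vfun N \<eta> E + c + drift_bound N \<eta> K TL TR E / Lam N K)"
proof -
  have gain: "0 \<le> exchange_gain N \<eta> i E * (2 / (1 + block_exp N \<eta> N))" for i
    using exchange_gain_nonneg[of N \<eta> i E] block_exp_bounds[OF N order.refl \<eta>] by simp
  have rates: "0 \<le> rateR K (E i) (E (Suc i))" if "i \<in> {1..N - 1}" for i
    using that pos K by (intro rateR_nonneg) (auto simp: positive_state_def less_imp_le)
  have bath: "0 \<le> Vfun N \<eta> E + c + (bath_gain N \<eta> T j - bath_loss N \<eta> j E)" if "0 < T" for T j
    using bath_loss_bounds[of N \<eta> j E] bath_gain_nonneg[OF N that \<eta>, of j] c by linarith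
  have ends: "0 < E 1" "0 < E N"
    using pos N by (auto simp: positive_state_def)
  show ?thesis
    unfolding Qop_def exchange_def[symmetric] drift_bound_def total_rate_def
  \<comment> \<open>Cases 3, 6 and 9 are the three kinds of events, case 12 is the uniformization constraint.\<close>
  proof (rule uniformized_average_le, goal_cases)
    case (3 i)
    then show ?case
      by (intro nn_integral_Vfun_exchange_le[OF pos _ _ \<eta> c]) auto
  next
    case (4 i)
    then show ?case
      using exchange_loss_bounds[of N \<eta> i E] gain[of i] c by simp
  next
    case 6
    then show ?case
      using N T by (intro nn_integral_Vfun_bath_le[OF pos _ _ \<eta> c]) auto
  next
    case 9
    then show ?case
      using N T by (intro nn_integral_Vfun_bath_le[OF pos _ _ \<eta> c]) auto
  next
    case 12
    then show ?case
      using total_rate_le_Lam[of K N TL TR E] K N by (simp add: total_rate_def)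
  qed (use rates ends bath T K c Vfun_nonneg[of N \<eta> E] in \<open>auto simp: Lam_def intro!: rateR_nonneg\<close>)
qed

lemma Qop_Vfun_le_drift:
  assumes pos: "positive_state N E" and N: "1 \<le> N" and \<eta>: "0 < \<eta>" "\<eta> < 1/2" and K: "1 \<le> K"
    and T: "0 < TL" "0 < TR" and drift: "drift_bound N \<eta> K TL TR E \<le> - d"
  shows "Qop N K TL TR (\<lambda>F. ennreal (Vfun N \<eta> F)) E \<le> ennreal (Vfun N \<eta> E - d / Lam N K)"
proof -
  have "Qop N K TL TR (\<lambda>F. ennreal (Vfun N \<eta> F + 0)) E
      \<le> ennreal (Vfun N \<eta> E + 0 + drift_bound N \<eta> K TL TR E / Lam N K)"
    by (rule Qop_Vfun_le[OF pos N \<eta> K T order.refl])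
  also have "\<dots> \<le> ennreal (Vfun N \<eta> E - d / Lam N K)"
    using divide_right_mono[OF drift, of "Lam N K"] K by (intro ennreal_leI) (simp add: Lam_def)
  finally show ?thesis
    by simp
qed

lemma Qop_power_Vfun_le:
  assumes N: "1 \<le> N" and \<eta>: "0 < \<eta>" "\<eta> < 1/2" and K: "1 \<le> K" and T: "0 < TL" "0 < TR"
    and B: "0 \<le> B" "\<And>E. positive_state N E \<Longrightarrow> drift_bound N \<eta> K TL TR E / Lam N K \<le> B"
    and pos: "positive_state N E"
  shows "((Qop N K TL TR ^^ n) (\<lambda>F. ennreal (Vfun N \<eta> F))) E \<le> ennreal (Vfun N \<eta> E + real n * B)"
  using pos
proof (induction n arbitrary: E)
  case 0
  then show ?case
    by simp
next
  case (Suc n)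
  have "((Qop N K TL TR ^^ Suc n) (\<lambda>F. ennreal (Vfun N \<eta> F))) E
      \<le> Qop N K TL TR (\<lambda>F. ennreal (Vfun N \<eta> F + real n * B)) E"
    using Suc N by (simp add: Qop_mono)
  also have "\<dots> \<le> ennreal (Vfun N \<eta> E + real n * B + drift_bound N \<eta> K TL TR E / Lam N K)"
    using B by (intro Qop_Vfun_le[OF Suc.prems N \<eta> K T]) auto
  also have "\<dots> \<le> ennreal (Vfun N \<eta> E + real (Suc n) * B)"
    using B(2)[OF Suc.prems] by (intro ennreal_leI) (simp add: algebra_simps)
  finally show ?case .
qed

section \<open>The drift estimate\<close>

lemma cut_by_bond_enlarged_block:
  assumes "1 \<le> i" "Suc i \<le> N" "(m, k) \<in> blocks N" "cut_by_bond i m k"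
  shows "(Suc m, min k i) \<in> blocks N" "in_block i (Suc m) (min k i)"
  using assms by (auto simp: mem_blocks_iff cut_by_bond_def in_block_def)

definition gain_exponent :: "nat \<Rightarrow> real \<Rightarrow> nat \<Rightarrow> real" where
  "gain_exponent N \<eta> m = (block_exp N \<eta> m + 1/2) / block_exp N \<eta> (Suc m)"

definition gain_profile :: "nat \<Rightarrow> real \<Rightarrow> real \<Rightarrow> real" where
  "gain_profile N \<eta> V = (\<Sum>m\<in>{1..<N}. V powr gain_exponent N \<eta> m)"

lemma gain_profile_nonneg: "0 \<le> gain_profile N \<eta> V"
  by (simp add: gain_profile_def sum_nonneg)

text \<open>The rate of the bond is at most \<open>sqrt x\<close> for the energy \<open>x\<close> of the enlarged block, and
  \<open>x powr (block_exp N \<eta> m + 1/2)\<close> is controlled by the term \<open>x powr block_exp N \<eta> (Suc m) \<le> V\<close>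
  of that block.\<close>

lemma rateR_mult_exchange_gain_le:
  assumes pos: "positive_state N E" and i: "1 \<le> i" "Suc i \<le> N" and \<eta>: "0 < \<eta>" "\<eta> < 1/2"
  shows "rateR K (E i) (E (Suc i)) * exchange_gain N \<eta> i E
    \<le> real (card (blocks N)) * gain_profile N \<eta> (Vfun N \<eta> E)"
proof -
  let ?r = "rateR K (E i) (E (Suc i))" and ?V = "Vfun N \<eta> E"
  have term_le: "?r * block_sum E (Suc m) (min k i) powr block_exp N \<eta> m \<le> gain_profile N \<eta> ?V"
    if b: "(m, k) \<in> blocks N" and cut: "cut_by_bond i m k" for m k
  proof -
    note big = cut_by_bond_enlarged_block[OF i b cut]
    define x where "x = block_sum E (Suc m) (min k i)"
    have x: "0 < x" "E i \<le> x"
      using block_sum_pos[OF pos big(1)] block_sum_ge[OF pos big] by (auto simp: x_def)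
    have m: "1 \<le> m" "m < N"
      using big(1) b by (auto simp: mem_blocks_iff)
    note e = block_exp_bounds[of m N, OF _ _ \<eta>] block_exp_bounds[of "Suc m" N, OF _ _ \<eta>]
    have "?r \<le> sqrt x"
      using rateR_le(2)[of K "E i" "E (Suc i)"] real_sqrt_le_mono[OF x(2)] by linarith
    then have "?r * x powr block_exp N \<eta> m \<le> sqrt x * x powr block_exp N \<eta> m"
      by (rule mult_right_mono) simp
    also have "\<dots> = x powr (block_exp N \<eta> m + 1/2)"
      using x by (simp add: powr_add powr_half_sqrt mult.commute)
    also have "\<dots> \<le> ?V powr gain_exponent N \<eta> m"
      unfolding gain_exponent_def using m e Vm_le_Vfun[OF big(1), of \<eta> E]
      by (intro powr_le_powr_of_neg_exponents[OF x(1)]) (auto simp: Vm_eq_block_sum_powr x_def)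
    also have "\<dots> \<le> gain_profile N \<eta> ?V"
      unfolding gain_profile_def using m by (intro member_le_sum) auto
    finally show ?thesis
      by (simp add: x_def)
  qed
  have "?r * exchange_gain N \<eta> i E = (\<Sum>(m, k)\<in>blocks N.
      if cut_by_bond i m k then ?r * block_sum E (Suc m) (min k i) powr block_exp N \<eta> m else 0)"
    unfolding exchange_gain_def sum_distrib_left by (intro sum.cong) auto
  also have "\<dots> \<le> (\<Sum>(m, k)\<in>blocks N. gain_profile N \<eta> ?V)"
    using term_le gain_profile_nonneg by (intro sum_mono) (auto split: prod.splits)
  finally show ?thesis
    by simp
qed

definition total_loss :: "nat \<Rightarrow> real \<Rightarrow> real \<Rightarrow> real \<Rightarrow> real \<Rightarrow> (nat \<Rightarrow> real) \<Rightarrow> real" where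
  "total_loss N \<eta> K TL TR E = (\<Sum>i = 1..N - 1. rateR K (E i) (E (Suc i)) * exchange_loss N \<eta> i E)
     + rateR K TL (E 1) * bath_loss N \<eta> 1 E + rateR K (E N) TR * bath_loss N \<eta> N E"

definition drift_majorant :: "nat \<Rightarrow> real \<Rightarrow> real \<Rightarrow> real \<Rightarrow> real \<Rightarrow> real" where
  "drift_majorant N \<eta> TL TR V =
     real (N - 1) * (2 / (1 + block_exp N \<eta> N)) * real (card (blocks N)) * gain_profile N \<eta> V
     + sqrt TL * bath_gain N \<eta> TL 1 + sqrt TR * bath_gain N \<eta> TR N"

lemma drift_bound_le:
  assumes pos: "positive_state N E" and N: "1 \<le> N" and \<eta>: "0 < \<eta>" "\<eta> < 1/2"
    and T: "0 < TL" "0 < TR"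
  shows "drift_bound N \<eta> K TL TR E
    \<le> drift_majorant N \<eta> TL TR (Vfun N \<eta> E) - total_loss N \<eta> K TL TR E"
proof -
  let ?c = "2 / (1 + block_exp N \<eta> N)" and ?G = "real (card (blocks N)) * gain_profile N \<eta> (Vfun N \<eta> E)"
  have c: "0 \<le> ?c"
    using block_exp_bounds[OF N order.refl \<eta>] by simp
  have "(\<Sum>i = 1..N - 1. rateR K (E i) (E (Suc i)) * (exchange_gain N \<eta> i E * ?c))
      \<le> (\<Sum>i = 1..N - 1. ?G * ?c)"
  proof (rule sum_mono)
    fix i
    assume "i \<in> {1..N - 1}"
    then have "rateR K (E i) (E (Suc i)) * exchange_gain N \<eta> i E \<le> ?G"
      by (intro rateR_mult_exchange_gain_le[OF pos _ _ \<eta>]) auto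
    then show "rateR K (E i) (E (Suc i)) * (exchange_gain N \<eta> i E * ?c) \<le> ?G * ?c"
      using c by (simp only: mult.assoc[symmetric]) (rule mult_right_mono)
  qed
  moreover have "rateR K TL (E 1) * bath_gain N \<eta> TL 1 \<le> sqrt TL * bath_gain N \<eta> TL 1"
    "rateR K (E N) TR * bath_gain N \<eta> TR N \<le> sqrt TR * bath_gain N \<eta> TR N"
    using bath_gain_nonneg[OF N _ \<eta>] T rateR_le by (auto intro!: mult_right_mono)
  ultimately show ?thesis
    unfolding drift_bound_def total_loss_def drift_majorant_def
    by (simp add: right_diff_distrib sum_subtractf algebra_simps)
qed

definition max_term :: "nat \<Rightarrow> real \<Rightarrow> (nat \<Rightarrow> real) \<Rightarrow> real" where
  "max_term N \<eta> E = Max ((\<lambda>(m, k). Vm N \<eta> m k E) ` blocks N)"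

lemma Vm_le_max_term: "(m, k) \<in> blocks N \<Longrightarrow> Vm N \<eta> m k E \<le> max_term N \<eta> E"
  unfolding max_term_def by (rule Max_ge) force+

lemma Vfun_le_max_term: "Vfun N \<eta> E \<le> real (card (blocks N)) * max_term N \<eta> E"
  unfolding Vfun_eq_sum_blocks using Vm_le_max_term[of _ _ N \<eta> E]
  by (intro sum_bounded_above) auto

lemma max_term_attained:
  assumes "1 \<le> N"
  obtains m k where "(m, k) \<in> blocks N" "Vm N \<eta> m k E = max_term N \<eta> E"
proof -
  have "(1, 1) \<in> blocks N"
    using assms by (simp add: mem_blocks_iff)
  then have "max_term N \<eta> E \<in> (\<lambda>(m, k). Vm N \<eta> m k E) ` blocks N"
    unfolding max_term_def by (intro Max_in) auto
  then show ?thesis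
    using that by force
qed

lemma max_term_le_loss:
  assumes "1 \<le> N"
  shows "max_term N \<eta> E \<le> bath_loss N \<eta> 1 E \<or> (\<exists>i\<in>{1..N - 1}. max_term N \<eta> E \<le> exchange_loss N \<eta> i E)"
proof -
  obtain m k where mk: "(m, k) \<in> blocks N" "Vm N \<eta> m k E = max_term N \<eta> E"
    using max_term_attained[OF assms] .
  have le_sum: "Vm N \<eta> m k E \<le> (\<Sum>(m', k')\<in>blocks N. if P m' k' then Vm N \<eta> m' k' E else 0)"
    if "P m k" for P
    using member_le_sum[of "(m, k)" "blocks N" "\<lambda>(m', k'). if P m' k' then Vm N \<eta> m' k' E else 0"]
      mk(1) that by (auto simp: Vm_nonneg)
  show ?thesis
  proof (cases "k = 1")
    case True
    then have "in_block 1 m k"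
      using mk(1) by (auto simp: mem_blocks_iff in_block_def)
    then show ?thesis
      using le_sum[of "in_block 1"] mk by (simp add: bath_loss_def)
  next
    case False
    then have "k - 1 \<in> {1..N - 1}" "cut_by_bond (k - 1) m k"
      using mk(1) by (auto simp: mem_blocks_iff cut_by_bond_def in_block_def)
    then show ?thesis
      using le_sum[of "cut_by_bond (k - 1)"] mk by (auto simp: exchange_loss_def)
  qed
qed

lemma total_loss_ge_terms:
  assumes pos: "positive_state N E" and N: "1 \<le> N" and K: "0 \<le> K" and T: "0 < TL" "0 < TR"
  shows "0 \<le> total_loss N \<eta> K TL TR E"
    and "rateR K TL (E 1) * bath_loss N \<eta> 1 E \<le> total_loss N \<eta> K TL TR E"
    and "i \<in> {1..N - 1} \<Longrightarrow> rateR K (E i) (E (Suc i)) * exchange_loss N \<eta> i E \<le> total_loss N \<eta> K TL TR E"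
proof -
  have E: "0 \<le> E i" if "i \<in> {1..N}" for i
    using pos that by (simp add: positive_state_def less_imp_le)
  have bond: "0 \<le> rateR K (E i) (E (Suc i)) * exchange_loss N \<eta> i E" if "i \<in> {1..N - 1}" for i
    using that K exchange_loss_bounds by (intro mult_nonneg_nonneg rateR_nonneg E) auto
  then have bonds: "0 \<le> (\<Sum>i = 1..N - 1. rateR K (E i) (E (Suc i)) * exchange_loss N \<eta> i E)"
    by (rule sum_nonneg)
  have ends: "0 \<le> rateR K TL (E 1) * bath_loss N \<eta> 1 E" "0 \<le> rateR K (E N) TR * bath_loss N \<eta> N E"
    using N T K bath_loss_bounds by (auto intro!: mult_nonneg_nonneg rateR_nonneg E)
  show "0 \<le> total_loss N \<eta> K TL TR E" "rateR K TL (E 1) * bath_loss N \<eta> 1 E \<le> total_loss N \<eta> K TL TR E"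
    unfolding total_loss_def using bonds ends by linarith+
  show "rateR K (E i) (E (Suc i)) * exchange_loss N \<eta> i E \<le> total_loss N \<eta> K TL TR E"
    if "i \<in> {1..N - 1}"
    unfolding total_loss_def using member_le_sum[OF that bond] ends by fastforce
qed

text \<open>Single sites are blocks, so \<open>E j powr (\<eta> - 1) \<le> W\<close> for every site; the threshold on \<open>W\<close>
  takes care of the two baths and of the cap \<open>K\<close>.\<close>

lemma rateR_ge_max_term_powr:
  assumes pos: "positive_state N E" and \<eta>: "0 < \<eta>" "\<eta> < 1/2" and K: "1 \<le> K"
    and T: "0 < TL" and W: "max 1 (TL powr (\<eta> - 1)) \<le> max_term N \<eta> E"
  shows "1 \<le> N \<Longrightarrow> max_term N \<eta> E powr (1 / (\<eta> - 1) / 2) \<le> rateR K TL (E 1)"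
    and "i \<in> {1..N - 1} \<Longrightarrow> max_term N \<eta> E powr (1 / (\<eta> - 1) / 2) \<le> rateR K (E i) (E (Suc i))"
proof -
  let ?\<rho> = "max_term N \<eta> E powr (1 / (\<eta> - 1) / 2)"
  have sqrt_le: "?\<rho> \<le> sqrt y" if "0 < y" "y powr (\<eta> - 1) \<le> max_term N \<eta> E" for y
    using that \<eta> by (intro powr_half_inverse_le_sqrt) auto
  have site: "?\<rho> \<le> sqrt (E j)" if "j \<in> {1..N}" for j
    using that pos Vm_le_max_term[of 1 j N \<eta> E]
    by (intro sqrt_le) (auto simp: positive_state_def mem_blocks_iff Vm_eq_block_sum_powr
        block_sum_def block_exp_def a_exp_def)
  have "?\<rho> \<le> max_term N \<eta> E powr 0"
    using W \<eta> by (intro powr_mono) (auto simp: divide_nonpos_neg)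
  then have \<rho>K: "?\<rho> \<le> K"
    using W K by simp
  show "?\<rho> \<le> rateR K TL (E 1)" if "1 \<le> N"
  proof (rule le_rateR[OF \<rho>K])
    show "?\<rho> \<le> sqrt TL"
      using T W by (intro sqrt_le) auto
    show "?\<rho> \<le> sqrt (E 1)"
      using that by (intro site) auto
  qed
  show "?\<rho> \<le> rateR K (E i) (E (Suc i))" if "i \<in> {1..N - 1}"
    using that by (intro le_rateR \<rho>K site) auto
qed

lemma total_loss_ge:
  assumes pos: "positive_state N E" and N: "1 \<le> N" and \<eta>: "0 < \<eta>" "\<eta> < 1/2" and K: "1 \<le> K"
    and T: "0 < TL" "0 < TR"
    and W: "max 1 (max (TL powr (\<eta> - 1)) (TR powr (\<eta> - 1))) \<le> max_term N \<eta> E"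
  shows "max_term N \<eta> E powr (1 - 1 / (2 * (1 - \<eta>))) \<le> total_loss N \<eta> K TL TR E"
proof -
  define W where "W = max_term N \<eta> E"
  define \<rho> where "\<rho> = W powr (1 / (\<eta> - 1) / 2)"
  have "max 1 (TL powr (\<eta> - 1)) \<le> max_term N \<eta> E"
    using W by simp
  note rates = rateR_ge_max_term_powr[OF pos \<eta> K T(1) this, folded W_def, folded \<rho>_def]
  have W1: "1 \<le> W" and \<rho>0: "0 \<le> \<rho>"
    using W by (simp_all add: W_def \<rho>_def)
  have "\<rho> * W = W powr (1 / (\<eta> - 1) / 2 + 1)"
    using W1 by (simp add: \<rho>_def powr_add)
  also have "1 / (\<eta> - 1) / 2 + 1 = 1 - 1 / (2 * (1 - \<eta>))"
    using \<eta> by (simp add: field_simps)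
  finally have \<rho>W: "\<rho> * W = W powr (1 - 1 / (2 * (1 - \<eta>)))" .
  have "\<rho> * W \<le> total_loss N \<eta> K TL TR E"
    using max_term_le_loss[OF N, of \<eta> E, folded W_def]
  proof (elim disjE bexE)
    assume "W \<le> bath_loss N \<eta> 1 E"
    then have "\<rho> * W \<le> rateR K TL (E 1) * bath_loss N \<eta> 1 E"
      using rates(1)[OF N] W1 \<rho>0 by (intro mult_mono) auto
    then show ?thesis
      using total_loss_ge_terms(2)[OF pos N _ T, of K \<eta>] K by linarith
  next
    fix i
    assume i: "i \<in> {1..N - 1}" and "W \<le> exchange_loss N \<eta> i E"
    then have "\<rho> * W \<le> rateR K (E i) (E (Suc i)) * exchange_loss N \<eta> i E"
      using rates(2)[OF i] W1 \<rho>0 by (intro mult_mono) auto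
    then show ?thesis
      using total_loss_ge_terms(3)[OF pos N _ T i, of K \<eta>] K by linarith
  qed
  then show ?thesis
    using \<rho>W by (simp add: W_def)
qed

lemma total_loss_ge_Vfun:
  assumes pos: "positive_state N E" and N: "1 \<le> N" and \<eta>: "0 < \<eta>" "\<eta> < 1/2" and K: "1 \<le> K"
    and T: "0 < TL" "0 < TR"
    and V: "real (card (blocks N)) * max 1 (max (TL powr (\<eta> - 1)) (TR powr (\<eta> - 1))) \<le> Vfun N \<eta> E"
  shows "Vfun N \<eta> E powr (1 - 1 / (2 * (1 - \<eta>))) / real (card (blocks N)) powr (1 - 1 / (2 * (1 - \<eta>)))
    \<le> total_loss N \<eta> K TL TR E"
proof -
  define \<alpha> where "\<alpha> = 1 - 1 / (2 * (1 - \<eta>))"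
  define nb where "nb = real (card (blocks N))"
  let ?V = "Vfun N \<eta> E" and ?W = "max_term N \<eta> E"
  have nb: "1 \<le> nb"
    using card_blocks_ge_one[OF N] by (simp add: nb_def)
  have VW: "?V \<le> nb * ?W"
    using Vfun_le_max_term[of N \<eta> E] by (simp add: nb_def)
  have "?V powr \<alpha> / nb powr \<alpha> = (?V / nb) powr \<alpha>"
    using nb Vfun_nonneg[of N \<eta> E] by (simp add: powr_divide)
  also have "\<dots> \<le> ?W powr \<alpha>"
    using VW nb Vfun_nonneg[of N \<eta> E] \<eta> by (intro powr_mono2) (auto simp: \<alpha>_def pos_divide_le_eq mult.commute)
  also have "\<dots> \<le> total_loss N \<eta> K TL TR E"
  proof (rule total_loss_ge[OF pos N \<eta> K T, folded \<alpha>_def])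
    have "nb * max 1 (max (TL powr (\<eta> - 1)) (TR powr (\<eta> - 1))) \<le> nb * ?W"
      using V VW by (simp add: nb_def)
    then show "max 1 (max (TL powr (\<eta> - 1)) (TR powr (\<eta> - 1))) \<le> ?W"
      using nb by simp
  qed
  finally show ?thesis
    by (simp add: \<alpha>_def nb_def)
qed

lemma gain_exponent_bounds:
  assumes m: "1 \<le> m" "m < N" and \<eta>: "0 < \<eta>" "\<eta> < 1 / 2 ^ N"
  shows "0 < gain_exponent N \<eta> m" "gain_exponent N \<eta> m < 1 - 1 / (2 * (1 - \<eta>))"
proof -
  have \<eta>2: "\<eta> < 1/2"
    using \<eta> inverse_two_power_le_half[of N] m by linarith
  note e = block_exp_bounds[of m N, OF _ _ \<eta>(1) \<eta>2] block_exp_bounds[of "Suc m" N, OF _ _ \<eta>(1) \<eta>2]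
  have eS: "block_exp N \<eta> (Suc m) < 0"
    using e m by simp
  show "0 < gain_exponent N \<eta> m"
    unfolding gain_exponent_def using e m eS by (intro divide_neg_neg) auto
  define t :: real where "t = 2 ^ (m - 1)"
  define D :: real where "D = 2 ^ N - 1"
  have D: "0 < D"
    using m by (simp add: D_def one_less_power)
  have "2 * t * \<eta> = \<eta> * 2 ^ m"
    using m by (cases m) (auto simp: t_def)
  also have "\<dots> \<le> \<eta> * 2 ^ N"
    using \<eta> m by (intro mult_left_mono power_increasing) auto
  also have "\<dots> < 1"
    using \<eta> by (simp add: field_simps)
  finally have "2 * t * \<eta> < 1" .
  then have pos: "0 < (\<eta> / D) * (1 - 2 * \<eta> * t)"
    using D \<eta> by (simp add: mult.commute mult.left_commute)
  have exps: "block_exp N \<eta> m = \<eta> - \<eta> * (t - 1) / D - 1"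
    "block_exp N \<eta> (Suc m) = \<eta> - \<eta> * (2 * t - 1) / D - 1"
    using m by (cases m; simp add: block_exp_def a_exp_def t_def D_def algebra_simps)+
  \<comment> \<open>Doubling \<open>2 ^ (m - 1)\<close> from one block length to the next leaves the positive margin
    \<open>1 - 2 * \<eta> * t\<close>; this is where \<open>\<eta> < 1 / 2 ^ N\<close> is needed.\<close>
  have "2 * (1 - \<eta>) * (block_exp N \<eta> m + 1/2) - (1 - 2 * \<eta>) * block_exp N \<eta> (Suc m)
      = (\<eta> / D) * (1 - 2 * \<eta> * t)"
    unfolding exps using D by (simp add: field_simps)
  then have "(1 - 2 * \<eta>) * block_exp N \<eta> (Suc m) < 2 * (1 - \<eta>) * (block_exp N \<eta> m + 1/2)"
    using pos by linarith
  then have "(1 - 2 * \<eta>) / (2 * (1 - \<eta>)) * block_exp N \<eta> (Suc m) < block_exp N \<eta> m + 1/2"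
    using \<eta>2 by (simp add: field_simps)
  moreover have "1 - 1 / (2 * (1 - \<eta>)) = (1 - 2 * \<eta>) / (2 * (1 - \<eta>))"
    using \<eta>2 by (simp add: field_simps)
  ultimately show "gain_exponent N \<eta> m < 1 - 1 / (2 * (1 - \<eta>))"
    unfolding gain_exponent_def using eS by (simp add: neg_divide_less_eq)
qed

lemma gain_profile_mono:
  assumes "0 \<le> V" "V \<le> V'" "0 < \<eta>" "\<eta> < 1 / 2 ^ N"
  shows "gain_profile N \<eta> V \<le> gain_profile N \<eta> V'"
  unfolding gain_profile_def
  using assms less_imp_le[OF gain_exponent_bounds(1)[of _ N \<eta>]] by (intro sum_mono powr_mono2) auto

lemma gain_profile_negligible:
  assumes "0 < \<eta>" "\<eta> < 1 / 2 ^ N" "0 < \<epsilon>"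
  shows "eventually (\<lambda>V. C * gain_profile N \<eta> V \<le> \<epsilon> * V powr (1 - 1 / (2 * (1 - \<eta>)))) at_top"
proof -
  define \<alpha> where "\<alpha> = 1 - 1 / (2 * (1 - \<eta>))"
  have "eventually (\<lambda>V. \<forall>m\<in>{1..<N}. C * V powr gain_exponent N \<eta> m \<le> \<epsilon> / N * V powr \<alpha>) at_top"
    using assms gain_exponent_bounds(2)[of _ N \<eta>]
    by (intro eventually_ball_finite ballI eventually_mult_powr_le_mult_powr_at_top)
      (auto simp: \<alpha>_def)
  then show ?thesis
  proof (elim eventually_mono)
    fix V
    assume le: "\<forall>m\<in>{1..<N}. C * V powr gain_exponent N \<eta> m \<le> \<epsilon> / N * V powr \<alpha>"
    have "C * gain_profile N \<eta> V \<le> (\<Sum>m\<in>{1..<N}. \<epsilon> / N * V powr \<alpha>)"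
      unfolding gain_profile_def sum_distrib_left using le by (intro sum_mono) auto
    also have "\<dots> \<le> \<epsilon> * V powr \<alpha>"
      using assms by (cases N) (auto simp: field_simps intro!: mult_right_mono)
    finally show "C * gain_profile N \<eta> V \<le> \<epsilon> * V powr (1 - 1 / (2 * (1 - \<eta>)))"
      by (simp add: \<alpha>_def)
  qed
qed

lemma drift_majorant_mono:
  assumes N: "1 \<le> N" and \<eta>: "0 < \<eta>" "\<eta> < 1 / 2 ^ N" and T: "0 < TL" "0 < TR" and V: "0 \<le> V" "V \<le> V'"
  shows "0 \<le> drift_majorant N \<eta> TL TR V" "drift_majorant N \<eta> TL TR V \<le> drift_majorant N \<eta> TL TR V'"
proof -
  define a where "a = real (N - 1) * (2 / (1 + block_exp N \<eta> N)) * real (card (blocks N))"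
  define b where "b = sqrt TL * bath_gain N \<eta> TL 1 + sqrt TR * bath_gain N \<eta> TR N"
  have \<eta>2: "\<eta> < 1/2"
    using \<eta> inverse_two_power_le_half[OF N] by linarith
  have ab: "0 \<le> a" "0 \<le> b"
    using N T block_exp_bounds[OF N order.refl \<eta>(1) \<eta>2] bath_gain_nonneg[OF N _ \<eta>(1) \<eta>2]
    by (auto simp: a_def b_def)
  have "drift_majorant N \<eta> TL TR W = a * gain_profile N \<eta> W + b" for W
    by (simp add: drift_majorant_def a_def b_def)
  then show "0 \<le> drift_majorant N \<eta> TL TR V" "drift_majorant N \<eta> TL TR V \<le> drift_majorant N \<eta> TL TR V'"
    using ab V \<eta> gain_profile_nonneg[of N \<eta> V] by (auto intro!: mult_left_mono gain_profile_mono)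
qed

lemma drift_majorant_negligible:
  assumes N: "1 \<le> N" and \<eta>: "0 < \<eta>" "\<eta> < 1 / 2 ^ N" and \<epsilon>: "0 < \<epsilon>"
  shows "eventually (\<lambda>V. drift_majorant N \<eta> TL TR V \<le> \<epsilon> * V powr (1 - 1 / (2 * (1 - \<eta>)))) at_top"
proof -
  define \<alpha> where "\<alpha> = 1 - 1 / (2 * (1 - \<eta>))"
  define a where "a = real (N - 1) * (2 / (1 + block_exp N \<eta> N)) * real (card (blocks N))"
  define b where "b = sqrt TL * bath_gain N \<eta> TL 1 + sqrt TR * bath_gain N \<eta> TR N"
  have "\<eta> < 1/2"
    using \<eta> inverse_two_power_le_half[OF N] by linarith
  then have "0 < \<alpha>"
    by (simp add: \<alpha>_def field_simps)
  have "eventually (\<lambda>V. a * gain_profile N \<eta> V + b \<le> \<epsilon> * V powr \<alpha>) at_top"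
    using gain_profile_negligible[OF \<eta> half_gt_zero[OF \<epsilon>], of a]
      eventually_le_mult_powr_at_top[OF \<open>0 < \<alpha>\<close> half_gt_zero[OF \<epsilon>], of b]
    unfolding \<alpha>_def by eventually_elim simp
  then show ?thesis
    by (simp add: drift_majorant_def a_def b_def \<alpha>_def add.assoc)
qed

lemma drift_bound_estimate:
  assumes N: "1 \<le> N" and \<eta>: "0 < \<eta>" "\<eta> < 1 / 2 ^ N" and K: "1 \<le> K" and T: "0 < TL" "0 < TR"
  obtains \<kappa> B Vb where "0 < \<kappa>" "\<kappa> \<le> 1"
    "\<And>E. positive_state N E \<Longrightarrow> drift_bound N \<eta> K TL TR E \<le> B"
    "\<And>E. positive_state N E \<Longrightarrow> Vb \<le> Vfun N \<eta> E
      \<Longrightarrow> drift_bound N \<eta> K TL TR E \<le> - \<kappa> * Vfun N \<eta> E powr (1 - 1 / (2 * (1 - \<eta>)))"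
proof -
  define \<alpha> where "\<alpha> = 1 - 1 / (2 * (1 - \<eta>))"
  define nb where "nb = real (card (blocks N))"
  define \<kappa> where "\<kappa> = 1 / (2 * nb powr \<alpha>)"
  let ?M = "drift_majorant N \<eta> TL TR"
  have \<eta>2: "\<eta> < 1/2"
    using \<eta> inverse_two_power_le_half[OF N] by linarith
  have "0 < \<alpha>"
    using \<eta>2 by (simp add: \<alpha>_def field_simps)
  then have "1 \<le> nb powr \<alpha>"
    using card_blocks_ge_one[OF N] by (intro ge_one_powr_ge_zero) (auto simp: nb_def)
  then have \<kappa>: "0 < \<kappa>" "\<kappa> \<le> 1"
    by (auto simp: \<kappa>_def divide_le_eq)
  obtain V1 where V1: "\<And>V. V1 \<le> V \<Longrightarrow> ?M V \<le> \<kappa> * V powr \<alpha>"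
    using drift_majorant_negligible[OF N \<eta> \<kappa>(1), of TL TR]
    by (auto simp: eventually_at_top_linorder \<alpha>_def)
  define Vb where "Vb = max V1 (nb * max 1 (max (TL powr (\<eta> - 1)) (TR powr (\<eta> - 1))))"
  have decay: "drift_bound N \<eta> K TL TR E \<le> - \<kappa> * Vfun N \<eta> E powr \<alpha>"
    if E: "positive_state N E" "Vb \<le> Vfun N \<eta> E" for E
  proof -
    have "2 * \<kappa> * Vfun N \<eta> E powr \<alpha> \<le> total_loss N \<eta> K TL TR E"
      using total_loss_ge_Vfun[OF E(1) N \<eta>(1) \<eta>2 K T] E(2) by (simp add: Vb_def \<alpha>_def \<kappa>_def nb_def)
    moreover have "?M (Vfun N \<eta> E) \<le> \<kappa> * Vfun N \<eta> E powr \<alpha>"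
      using E(2) by (intro V1) (simp add: Vb_def)
    ultimately show ?thesis
      using drift_bound_le[OF E(1) N \<eta>(1) \<eta>2 T, of K] by linarith
  qed
  have "drift_bound N \<eta> K TL TR E \<le> ?M Vb" if E: "positive_state N E" for E
  proof (cases "Vb \<le> Vfun N \<eta> E")
    case True
    have "0 \<le> Vb"
      by (simp add: Vb_def nb_def le_max_iff_disj)
    moreover have "0 \<le> \<kappa> * Vfun N \<eta> E powr \<alpha>"
      using \<kappa> by simp
    ultimately show ?thesis
      using decay[OF E True] drift_majorant_mono(1)[OF N \<eta> T, of Vb Vb] by linarith
  next
    case False
    then show ?thesis
      using drift_bound_le[OF E N \<eta>(1) \<eta>2 T, of K] total_loss_ge_terms(1)[OF E N _ T, of K \<eta>] K
        drift_majorant_mono(2)[OF N \<eta> T Vfun_nonneg[of N \<eta> E], of Vb]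
      by linarith
  qed
  from that[OF \<kappa> this decay[unfolded \<alpha>_def]] show ?thesis .
qed

section \<open>The transition semigroup\<close>

lemma Ph_Vfun_le:
  assumes N: "1 \<le> N" and \<eta>: "0 < \<eta>" "\<eta> < 1/2" and K: "1 \<le> K" and T: "0 < TL" "0 < TR"
    and h: "0 < h"
    and B: "0 \<le> B" "\<And>F. positive_state N F \<Longrightarrow> drift_bound N \<eta> K TL TR F / Lam N K \<le> B"
    and pos: "positive_state N E" and \<delta>: "0 \<le> \<delta>" "\<delta> \<le> Vfun N \<eta> E"
    and one_step: "Qop N K TL TR (\<lambda>F. ennreal (Vfun N \<eta> F)) E \<le> ennreal (Vfun N \<eta> E - \<delta>)"
  shows "Ph N K TL TR h (\<lambda>F. ennreal (Vfun N \<eta> F)) E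
    \<le> ennreal (Vfun N \<eta> E + exp (Lam N K * h) * B - Lam N K * h * exp (- (Lam N K * h)) * \<delta>)"
  unfolding Ph_def minus_mult_left[symmetric]
  using K h B(1) \<delta> one_step Qop_power_Vfun_le[OF N \<eta> K T B pos]
  by (intro poisson_mixture_le) (auto simp: Lam_def)

lemma Ph_Vfun_decay:
  assumes N: "1 \<le> N" and \<eta>: "0 < \<eta>" "\<eta> < 1 / 2 ^ N" and K: "1 \<le> K" and T: "0 < TL" "0 < TR"
    and h: "0 < h"
  shows "\<exists>c0 > 0. \<exists>M0 > 1. \<forall>E :: nat \<Rightarrow> real.
    (\<forall>i \<in> {1..N}. E i > 0) \<and> Vfun N \<eta> E > M0 \<longrightarrow>
    Ph N K TL TR h (\<lambda>E'. ennreal (Vfun N \<eta> E')) E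
      \<le> ennreal (Vfun N \<eta> E - c0 * Vfun N \<eta> E powr (1 - 1 / (2 * (1 - \<eta>))))"
proof -
  define \<alpha> where "\<alpha> = 1 - 1 / (2 * (1 - \<eta>))"
  define L where "L = Lam N K"
  have \<eta>2: "\<eta> < 1/2"
    using \<eta> inverse_two_power_le_half[OF N] by linarith
  have \<alpha>: "0 < \<alpha>" "\<alpha> \<le> 1"
    using \<eta>2 \<eta> by (simp_all add: \<alpha>_def field_simps)
  have L: "1 \<le> L"
    using K N mult_mono[of 1 "real (N + 1)" 1 K] by (simp add: L_def Lam_def)
  obtain \<kappa> B Vb where \<kappa>: "0 < \<kappa>" "\<kappa> \<le> 1"
    and bounded: "\<And>E. positive_state N E \<Longrightarrow> drift_bound N \<eta> K TL TR E \<le> B"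
    and decay: "\<And>E. positive_state N E \<Longrightarrow> Vb \<le> Vfun N \<eta> E
      \<Longrightarrow> drift_bound N \<eta> K TL TR E \<le> - (\<kappa> * Vfun N \<eta> E powr \<alpha>)"
    using drift_bound_estimate[OF N \<eta> K T] unfolding \<alpha>_def by (metis minus_mult_left)
  define Bq where "Bq = max 0 B / L"
  have Bq: "0 \<le> Bq" "\<And>E. positive_state N E \<Longrightarrow> drift_bound N \<eta> K TL TR E / L \<le> Bq"
    using L bounded by (auto simp: Bq_def le_max_iff_disj intro!: divide_right_mono)
  define c0 where "c0 = h * exp (- (L * h)) * \<kappa> / 2"
  have c0: "0 < c0"
    using h \<kappa> by (simp add: c0_def)
  obtain V2 where V2: "\<And>V. V2 \<le> V \<Longrightarrow> exp (L * h) * Bq \<le> c0 * V powr \<alpha>"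
    using eventually_le_mult_powr_at_top[OF \<alpha>(1) c0] by (auto simp: eventually_at_top_linorder)
  have decrease: "Ph N K TL TR h (\<lambda>E'. ennreal (Vfun N \<eta> E')) E
      \<le> ennreal (Vfun N \<eta> E - c0 * Vfun N \<eta> E powr \<alpha>)"
    if E: "positive_state N E" "max (max Vb V2) 1 < Vfun N \<eta> E" for E
  proof -
    let ?V = "Vfun N \<eta> E"
    have V1: "1 < ?V"
      using E(2) by simp
    have "\<kappa> * ?V powr \<alpha> / L \<le> ?V"
      using \<kappa> L V1 \<alpha> by (intro mult_powr_divide_le_self) auto
    then have "Ph N K TL TR h (\<lambda>E'. ennreal (Vfun N \<eta> E')) E
        \<le> ennreal (?V + exp (L * h) * Bq - L * h * exp (- (L * h)) * (\<kappa> * ?V powr \<alpha> / L))"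
      using Qop_Vfun_le_drift[OF E(1) N \<eta>(1) \<eta>2 K T decay[OF E(1)]] E(2) \<kappa> L
      unfolding L_def by (intro Ph_Vfun_le[OF N \<eta>(1) \<eta>2 K T h Bq[unfolded L_def] E(1)]) auto
    also have "\<dots> \<le> ennreal (?V - c0 * ?V powr \<alpha>)"
      using V2[of ?V] E(2) L by (intro ennreal_leI) (simp add: c0_def field_simps)
    finally show ?thesis .
  qed
  show ?thesis
    by (rule exI[of _ c0], rule conjI[OF c0], rule exI[of _ "max (max Vb V2) 2"])
      (use decrease in \<open>auto simp: positive_state_def \<alpha>_def\<close>)
qed

theorem theorem4p1:
  fixes N :: nat and TL TR :: real
  assumes "N \<ge> 1" and "TL > 0" and "TR > 0"
  shows "\<exists>K0. \<forall>K \<ge> K0. \<exists>\<eta>0 > 0. \<forall>\<eta>. 0 < \<eta> \<and> \<eta> < \<eta>0 \<longrightarrow>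
           (\<exists>h0 > 0. \<forall>h. 0 < h \<and> h < h0 \<longrightarrow>
             (\<exists>c0 > 0. \<exists>M0 > 1. \<forall>E :: nat \<Rightarrow> real.
                (\<forall>i \<in> {1..N}. E i > 0) \<and> Vfun N \<eta> E > M0 \<longrightarrow>
                Ph N K TL TR h (\<lambda>E'. ennreal (Vfun N \<eta> E')) E
                  \<le> ennreal (Vfun N \<eta> E - c0 * Vfun N \<eta> E powr (1 - 1 / (2 * (1 - \<eta>))))))"
  using Ph_Vfun_decay[OF assms(1) _ _ _ assms(2,3)] zero_less_one
  by (intro exI[of _ 1] allI impI exI[of _ "1 / 2 ^ N"]) auto

end
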